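(* Let $A$ be a Noetherian commutative ring with identity, let $A[\mathbf{x}]=A[x_1,\ldots,x_n]$ be equipped with a monomial order, let $I\subset A[\mathbf{x}]$ be an ideal, let $q\subset A$ be an isolated primary component of $I\cap A$ (i.e. a primary component whose associated prime is a minimal prime of $I\cap A$), and let $p\subset A$ be its associated minimal prime. Define $B=A_p/q_p$. Then $$\mathrm{in}(I)\,B[\mathbf{x}]=\mathrm{in}(I\,B[\mathbf{x}]).$$
   Context: A monomial order $>$ is a total order on monomials such that $\mathbf{x}^E>\mathbf{x}^F$ implies $\mathbf{x}^G\mathbf{x}^E>\mathbf{x}^G\mathbf{x}^F$, and $x_i>1$ for each $i$; the same order is used over $B$. $\mathrm{in}(f)$ is the greatest term $c\,\mathbf{x}^E$ ($c\neq0$) of a nonzero polynomial $f$; $\mathrm{in}(I)$ is the ideal generated by all $\mathrm{in}(f)$, $f\in I$. $K\,B[\mathbf{x}]$ denotes the ideal of $B[\mathbf{x}]$ generated by the image of $K\subset A[\mathbf{x}]$ under the natural map $A\to B$ applied to coefficients. *)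

theory Defs
  imports "HOL-Algebra.QuotRing" "HOL-Algebra.Ring_Divisibility" "HOL-Library.Function_Algebras"
begin

text \<open>Exponent vectors are functions nat => nat vanishing outside {0..<n};
  a polynomial is a finitely supported coefficient function on them.\<close>

definition monoms :: "nat \<Rightarrow> (nat \<Rightarrow> nat) set" where
  "monoms n = {E. \<forall>i\<ge>n. E i = 0}"

definition mpoly_ring :: "('a, 'm) ring_scheme \<Rightarrow> nat \<Rightarrow> ((nat \<Rightarrow> nat) \<Rightarrow> 'a) ring" where
  "mpoly_ring R n =
     \<lparr> carrier = {f. (\<forall>E. f E \<in> carrier R) \<and> (\<forall>E. E \<notin> monoms n \<longrightarrow> f E = \<zero>\<^bsub>R\<^esub>)
                     \<and> finite {E. f E \<noteq> \<zero>\<^bsub>R\<^esub>}},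
       mult = (\<lambda>f g E. if E \<in> monoms n
                               then finsum R (\<lambda>F. f F \<otimes>\<^bsub>R\<^esub> g (E - F)) {F. F \<le> E}
                               else \<zero>\<^bsub>R\<^esub>),
       one = (\<lambda>E. if E = 0 then \<one>\<^bsub>R\<^esub> else \<zero>\<^bsub>R\<^esub>),
       zero = (\<lambda>E. \<zero>\<^bsub>R\<^esub>),
       add = (\<lambda>f g E. f E \<oplus>\<^bsub>R\<^esub> g E) \<rparr>"

definition mpoly_const :: "('a, 'm) ring_scheme \<Rightarrow> 'a \<Rightarrow> (nat \<Rightarrow> nat) \<Rightarrow> 'a" where
  "mpoly_const R a = (\<lambda>E. if E = 0 then a else \<zero>\<^bsub>R\<^esub>)"

text \<open>Contraction I \<inter> A of an ideal of A[x] to A.\<close>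
definition contract_const :: "('a, 'm) ring_scheme \<Rightarrow> ((nat \<Rightarrow> nat) \<Rightarrow> 'a) set \<Rightarrow> 'a set" where
  "contract_const R I = {a \<in> carrier R. mpoly_const R a \<in> I}"

text \<open>gt E F means x^E > x^F.\<close>
definition monomial_order :: "nat \<Rightarrow> ((nat \<Rightarrow> nat) \<Rightarrow> (nat \<Rightarrow> nat) \<Rightarrow> bool) \<Rightarrow> bool" where
  "monomial_order n gt \<longleftrightarrow>
     (\<forall>E\<in>monoms n. \<not> gt E E) \<and>
     (\<forall>E\<in>monoms n. \<forall>F\<in>monoms n. \<forall>G\<in>monoms n. gt E F \<longrightarrow> gt F G \<longrightarrow> gt E G) \<and>
     (\<forall>E\<in>monoms n. \<forall>F\<in>monoms n. E \<noteq> F \<longrightarrow> gt E F \<or> gt F E) \<and>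
     (\<forall>E\<in>monoms n. \<forall>F\<in>monoms n. \<forall>G\<in>monoms n. gt E F \<longrightarrow> gt (G + E) (G + F)) \<and>
     (\<forall>i<n. gt (\<lambda>j. if j = i then 1 else 0) 0)"

definition lead_monom :: "('a, 'm) ring_scheme \<Rightarrow> ((nat \<Rightarrow> nat) \<Rightarrow> (nat \<Rightarrow> nat) \<Rightarrow> bool)
    \<Rightarrow> ((nat \<Rightarrow> nat) \<Rightarrow> 'a) \<Rightarrow> nat \<Rightarrow> nat" where
  "lead_monom R gt f = (THE E. f E \<noteq> \<zero>\<^bsub>R\<^esub> \<and> (\<forall>F. f F \<noteq> \<zero>\<^bsub>R\<^esub> \<and> F \<noteq> E \<longrightarrow> gt E F))"

definition init_term :: "('a, 'm) ring_scheme \<Rightarrow> ((nat \<Rightarrow> nat) \<Rightarrow> (nat \<Rightarrow> nat) \<Rightarrow> bool)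
    \<Rightarrow> ((nat \<Rightarrow> nat) \<Rightarrow> 'a) \<Rightarrow> (nat \<Rightarrow> nat) \<Rightarrow> 'a" where
  "init_term R gt f = (\<lambda>F. if F = lead_monom R gt f then f F else \<zero>\<^bsub>R\<^esub>)"

definition init_ideal :: "('a, 'm) ring_scheme \<Rightarrow> nat \<Rightarrow> ((nat \<Rightarrow> nat) \<Rightarrow> (nat \<Rightarrow> nat) \<Rightarrow> bool)
    \<Rightarrow> ((nat \<Rightarrow> nat) \<Rightarrow> 'a) set \<Rightarrow> ((nat \<Rightarrow> nat) \<Rightarrow> 'a) set" where
  "init_ideal R n gt I =
     genideal (mpoly_ring R n) {init_term R gt f | f. f \<in> I \<and> f \<noteq> \<zero>\<^bsub>mpoly_ring R n\<^esub>}"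

definition primary_ideal :: "('a, 'm) ring_scheme \<Rightarrow> 'a set \<Rightarrow> bool" where
  "primary_ideal R q \<longleftrightarrow> ideal q R \<and> q \<noteq> carrier R \<and>
     (\<forall>a\<in>carrier R. \<forall>b\<in>carrier R. a \<otimes>\<^bsub>R\<^esub> b \<in> q \<longrightarrow> a \<in> q \<or> (\<exists>k::nat. b [^]\<^bsub>R\<^esub> k \<in> q))"

definition radical :: "('a, 'm) ring_scheme \<Rightarrow> 'a set \<Rightarrow> 'a set" where
  "radical R J = {a \<in> carrier R. \<exists>k::nat. a [^]\<^bsub>R\<^esub> k \<in> J}"

definition minimal_prime_of :: "('a, 'm) ring_scheme \<Rightarrow> 'a set \<Rightarrow> 'a set \<Rightarrow> bool" where
  "minimal_prime_of R p J \<longleftrightarrow> primeideal p R \<and> J \<subseteq> p \<and>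
     (\<forall>p'. primeideal p' R \<and> J \<subseteq> p' \<and> p' \<subseteq> p \<longrightarrow> p' = p)"

definition minimal_primary_decomposition :: "('a, 'm) ring_scheme \<Rightarrow> 'a set set \<Rightarrow> 'a set \<Rightarrow> bool" where
  "minimal_primary_decomposition R Q J \<longleftrightarrow> finite Q \<and> Q \<noteq> {} \<and>
     (\<forall>q\<in>Q. primary_ideal R q) \<and> \<Inter>Q = J \<and> inj_on (radical R) Q \<and>
     (\<forall>q\<in>Q. \<Inter>(Q - {q}) \<noteq> J)"

definition isolated_primary_component :: "('a, 'm) ring_scheme \<Rightarrow> 'a set \<Rightarrow> 'a set \<Rightarrow> 'a set \<Rightarrow> bool" where
  "isolated_primary_component R J q p \<longleftrightarrow>
     (\<exists>Q. minimal_primary_decomposition R Q J \<and> q \<in> Q) \<and>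
     p = radical R q \<and> minimal_prime_of R p J"

definition loc_rel :: "('a, 'm) ring_scheme \<Rightarrow> 'a set \<Rightarrow> (('a \<times> 'a) \<times> ('a \<times> 'a)) set" where
  "loc_rel R S = {((a, s), (b, t)). a \<in> carrier R \<and> b \<in> carrier R \<and> s \<in> S \<and> t \<in> S \<and>
       (\<exists>u\<in>S. u \<otimes>\<^bsub>R\<^esub> (a \<otimes>\<^bsub>R\<^esub> t \<ominus>\<^bsub>R\<^esub> b \<otimes>\<^bsub>R\<^esub> s) = \<zero>\<^bsub>R\<^esub>)}"

definition frac :: "('a, 'm) ring_scheme \<Rightarrow> 'a set \<Rightarrow> 'a \<Rightarrow> 'a \<Rightarrow> ('a \<times> 'a) set" where
  "frac R S a s = loc_rel R S `` {(a, s)}"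

definition loc_ring :: "('a, 'm) ring_scheme \<Rightarrow> 'a set \<Rightarrow> ('a \<times> 'a) set ring" where
  "loc_ring R S =
     \<lparr> carrier = (carrier R \<times> S) // loc_rel R S,
       mult = (\<lambda>X Y. \<Union>{frac R S (a \<otimes>\<^bsub>R\<^esub> b) (s \<otimes>\<^bsub>R\<^esub> t) | a s b t. (a, s) \<in> X \<and> (b, t) \<in> Y}),
       one = frac R S \<one>\<^bsub>R\<^esub> \<one>\<^bsub>R\<^esub>,
       zero = frac R S \<zero>\<^bsub>R\<^esub> \<one>\<^bsub>R\<^esub>,
       add = (\<lambda>X Y. \<Union>{frac R S (a \<otimes>\<^bsub>R\<^esub> t \<oplus>\<^bsub>R\<^esub> b \<otimes>\<^bsub>R\<^esub> s) (s \<otimes>\<^bsub>R\<^esub> t) | a s b t.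
                                  (a, s) \<in> X \<and> (b, t) \<in> Y}) \<rparr>"

definition loc_at :: "('a, 'm) ring_scheme \<Rightarrow> 'a set \<Rightarrow> ('a \<times> 'a) set ring" where
  "loc_at R p = loc_ring R (carrier R - p)"

definition ext_ideal_loc :: "('a, 'm) ring_scheme \<Rightarrow> 'a set \<Rightarrow> 'a set \<Rightarrow> ('a \<times> 'a) set set" where
  "ext_ideal_loc R p q = {frac R (carrier R - p) a s | a s. a \<in> q \<and> s \<in> carrier R - p}"

definition B_ring :: "('a, 'm) ring_scheme \<Rightarrow> 'a set \<Rightarrow> 'a set \<Rightarrow> ('a \<times> 'a) set set ring" where
  "B_ring R p q = loc_at R p Quot ext_ideal_loc R p q"

definition to_B :: "('a, 'm) ring_scheme \<Rightarrow> 'a set \<Rightarrow> 'a set \<Rightarrow> 'a \<Rightarrow> ('a \<times> 'a) set set" where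
  "to_B R p q a = a_r_coset (loc_at R p) (ext_ideal_loc R p q) (frac R (carrier R - p) a \<one>\<^bsub>R\<^esub>)"

definition map_coeffs :: "('a \<Rightarrow> 'b) \<Rightarrow> ((nat \<Rightarrow> nat) \<Rightarrow> 'a) \<Rightarrow> (nat \<Rightarrow> nat) \<Rightarrow> 'b" where
  "map_coeffs \<phi> f = (\<lambda>E. \<phi> (f E))"

definition ext_to_Bx :: "('a, 'm) ring_scheme \<Rightarrow> nat \<Rightarrow> 'a set \<Rightarrow> 'a set
    \<Rightarrow> ((nat \<Rightarrow> nat) \<Rightarrow> 'a) set \<Rightarrow> ((nat \<Rightarrow> nat) \<Rightarrow> ('a \<times> 'a) set set) set" where
  "ext_to_Bx R n p q K = genideal (mpoly_ring (B_ring R p q) n) (map_coeffs (to_B R p q) ` K)"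

end

theory Submission
  imports Defs
begin

text \<open>Let \<open>\<phi> : A \<rightarrow> B = A\<^sub>p / q\<^sub>p\<close> and \<open>\<Phi>\<close> its extension to coefficients. As \<open>q\<close> is an
  isolated component of \<open>I \<inter> A\<close>, some \<open>u \<notin> p\<close> satisfies \<open>u q \<subseteq> I \<inter> A\<close>. Every \<open>g \<in> I B[x]\<close>
  satisfies \<open>\<phi>(t) g = \<Phi>(f)\<close> with \<open>t \<notin> p\<close> and \<open>f \<in> I\<close>, since such \<open>g\<close> form an ideal containing
  \<open>\<Phi>(I)\<close>. Removing from \<open>u f\<close> the terms with coefficient in \<open>q = ker \<phi>\<close>, which lie in \<open>I\<close> because
  \<open>u q \<subseteq> I\<close>, gives \<open>f' \<in> I\<close> with \<open>g = v \<Phi>(f')\<close> for a unit \<open>v\<close> of \<open>B\<close> and no coefficient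
  of \<open>f'\<close> killed by \<open>\<phi>\<close>. Then \<open>g\<close> and \<open>f'\<close> have the same support, so
  \<open>in(g) = v \<Phi>(in(f')) \<in> in(I) B[x]\<close>. Conversely \<open>\<Phi>(in(f))\<close> is either \<open>0\<close> or \<open>in(\<Phi>(f))\<close>.
  Only three properties of \<open>\<phi>\<close> are used: \<open>\<phi>(A - p)\<close> consists of units, every element of \<open>B\<close>
  is a fraction \<open>\<phi>(a)/\<phi>(t)\<close>, and \<open>u ker \<phi> \<subseteq> I \<inter> A\<close>.\<close>

section \<open>Localization at a multiplicative subset\<close>

locale localization = cring +
  fixes S
  assumes submonoid_S: "submonoid S R"
begin

sublocale S: submonoid S R by (rule submonoid_S)

lemma S_carrier [simp]: "s \<in> S \<Longrightarrow> s \<in> carrier R"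
  using S.subset by blast

lemma loc_rel_iff:
  "((a, s), (b, t)) \<in> loc_rel R S \<longleftrightarrow> a \<in> carrier R \<and> b \<in> carrier R \<and> s \<in> S \<and> t \<in> S \<and>
     (\<exists>u\<in>S. u \<otimes> (a \<otimes> t \<ominus> b \<otimes> s) = \<zero>)"
  unfolding loc_rel_def by simp

lemma equiv_loc_rel: "equiv (carrier R \<times> S) (loc_rel R S)"
proof (rule equivI)
  show "loc_rel R S \<subseteq> (carrier R \<times> S) \<times> (carrier R \<times> S)"
    unfolding loc_rel_def by auto
  show "refl_on (carrier R \<times> S) (loc_rel R S)"
  proof (rule refl_onI)
    fix x assume "x \<in> carrier R \<times> S"
    then obtain a s where x: "x = (a, s)" "a \<in> carrier R" "s \<in> S" by auto
    then have "\<one> \<otimes> (a \<otimes> s \<ominus> a \<otimes> s) = \<zero>" by (simp add: r_neg a_minus_def)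
    then show "(x, x) \<in> loc_rel R S" using x by (auto simp: loc_rel_iff intro!: bexI[of _ \<one>])
  qed
  show "sym (loc_rel R S)"
  proof (rule symI)
    fix x y assume "(x, y) \<in> loc_rel R S"
    then obtain a s b t u where x: "x = (a, s)" "y = (b, t)" "a \<in> carrier R" "b \<in> carrier R"
      "s \<in> S" "t \<in> S" "u \<in> S" "u \<otimes> (a \<otimes> t \<ominus> b \<otimes> s) = \<zero>"
      by (cases x, cases y) (auto simp: loc_rel_iff)
    have "s \<in> carrier R" "t \<in> carrier R" "u \<in> carrier R" using x by auto
    then have "u \<otimes> (b \<otimes> s \<ominus> a \<otimes> t) = \<ominus> (u \<otimes> (a \<otimes> t \<ominus> b \<otimes> s))"
      using x(3,4) by algebra
    then show "(y, x) \<in> loc_rel R S" using x by (auto simp: loc_rel_iff)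
  qed
  show "trans (loc_rel R S)"
  proof (rule transI)
    fix x y z assume "(x, y) \<in> loc_rel R S" "(y, z) \<in> loc_rel R S"
    then obtain a s b t c r u v where x: "x = (a, s)" "y = (b, t)" "z = (c, r)"
      "a \<in> carrier R" "b \<in> carrier R" "c \<in> carrier R" "s \<in> S" "t \<in> S" "r \<in> S" "u \<in> S" "v \<in> S"
      "u \<otimes> (a \<otimes> t \<ominus> b \<otimes> s) = \<zero>" "v \<otimes> (b \<otimes> r \<ominus> c \<otimes> t) = \<zero>"
      by (cases x, cases y, cases z) (auto simp: loc_rel_iff)
    have c: "s \<in> carrier R" "t \<in> carrier R" "r \<in> carrier R" "u \<in> carrier R" "v \<in> carrier R"
      using x by auto
    then have "(t \<otimes> u \<otimes> v) \<otimes> (a \<otimes> r \<ominus> c \<otimes> s) =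
        (v \<otimes> r) \<otimes> (u \<otimes> (a \<otimes> t \<ominus> b \<otimes> s)) \<oplus> (u \<otimes> s) \<otimes> (v \<otimes> (b \<otimes> r \<ominus> c \<otimes> t))"
      using x(4-6) by algebra
    also have "\<dots> = \<zero>" using x c by simp
    finally show "(x, z) \<in> loc_rel R S" using x by (auto simp: loc_rel_iff)
  qed
qed

lemma frac_eq_iff:
  "\<lbrakk>a \<in> carrier R; b \<in> carrier R; s \<in> S; t \<in> S\<rbrakk> \<Longrightarrow>
     frac R S a s = frac R S b t \<longleftrightarrow> (\<exists>u\<in>S. u \<otimes> (a \<otimes> t \<ominus> b \<otimes> s) = \<zero>)"
  unfolding frac_def by (subst eq_equiv_class_iff[OF equiv_loc_rel]) (auto simp: loc_rel_iff)

lemma frac_eqI: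
  "\<lbrakk>a \<in> carrier R; b \<in> carrier R; s \<in> S; t \<in> S; a \<otimes> t = b \<otimes> s\<rbrakk> \<Longrightarrow> frac R S a s = frac R S b t"
  by (subst frac_eq_iff) (auto intro!: bexI[of _ \<one>])

lemma mem_frac_iff: "(b, t) \<in> frac R S a s \<longleftrightarrow> ((a, s), (b, t)) \<in> loc_rel R S"
  unfolding frac_def by simp

lemma self_mem_frac: "\<lbrakk>a \<in> carrier R; s \<in> S\<rbrakk> \<Longrightarrow> (a, s) \<in> frac R S a s"
  using equiv_loc_rel unfolding mem_frac_iff equiv_def refl_on_def by auto

lemma carrier_loc_ring: "X \<in> carrier (loc_ring R S) \<longleftrightarrow> (\<exists>a\<in>carrier R. \<exists>s\<in>S. X = frac R S a s)"
  unfolding loc_ring_def quotient_def frac_def by auto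

lemma frac_closed [intro, simp]: "\<lbrakk>a \<in> carrier R; s \<in> S\<rbrakk> \<Longrightarrow> frac R S a s \<in> carrier (loc_ring R S)"
  unfolding carrier_loc_ring by auto

lemma loc_ring_cases:
  assumes "X \<in> carrier (loc_ring R S)"
  obtains a s where "a \<in> carrier R" "s \<in> S" "X = frac R S a s"
  using assms unfolding carrier_loc_ring by auto

lemma frac_mult_cong:
  assumes "((a, s), (a', s')) \<in> loc_rel R S" "((b, t), (b', t')) \<in> loc_rel R S"
  shows "frac R S (a \<otimes> b) (s \<otimes> t) = frac R S (a' \<otimes> b') (s' \<otimes> t')"
proof -
  obtain u v where x: "a \<in> carrier R" "a' \<in> carrier R" "b \<in> carrier R" "b' \<in> carrier R"
    "s \<in> S" "s' \<in> S" "t \<in> S" "t' \<in> S" "u \<in> S" "v \<in> S"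
    "u \<otimes> (a \<otimes> s' \<ominus> a' \<otimes> s) = \<zero>" "v \<otimes> (b \<otimes> t' \<ominus> b' \<otimes> t) = \<zero>"
    using assms by (auto simp: loc_rel_iff)
  have c: "s \<in> carrier R" "s' \<in> carrier R" "t \<in> carrier R" "t' \<in> carrier R" "u \<in> carrier R"
    "v \<in> carrier R" using x by auto
  then have "(u \<otimes> v) \<otimes> ((a \<otimes> b) \<otimes> (s' \<otimes> t') \<ominus> (a' \<otimes> b') \<otimes> (s \<otimes> t)) =
      (v \<otimes> b \<otimes> t') \<otimes> (u \<otimes> (a \<otimes> s' \<ominus> a' \<otimes> s)) \<oplus> (u \<otimes> a' \<otimes> s) \<otimes> (v \<otimes> (b \<otimes> t' \<ominus> b' \<otimes> t))"
    using x(1-4) by algebra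
  also have "\<dots> = \<zero>" using x c by simp
  finally show ?thesis using x by (subst frac_eq_iff) (auto intro!: bexI[of _ "u \<otimes> v"])
qed

lemma frac_add_cong:
  assumes "((a, s), (a', s')) \<in> loc_rel R S" "((b, t), (b', t')) \<in> loc_rel R S"
  shows "frac R S (a \<otimes> t \<oplus> b \<otimes> s) (s \<otimes> t) = frac R S (a' \<otimes> t' \<oplus> b' \<otimes> s') (s' \<otimes> t')"
proof -
  obtain u v where x: "a \<in> carrier R" "a' \<in> carrier R" "b \<in> carrier R" "b' \<in> carrier R"
    "s \<in> S" "s' \<in> S" "t \<in> S" "t' \<in> S" "u \<in> S" "v \<in> S"
    "u \<otimes> (a \<otimes> s' \<ominus> a' \<otimes> s) = \<zero>" "v \<otimes> (b \<otimes> t' \<ominus> b' \<otimes> t) = \<zero>"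
    using assms by (auto simp: loc_rel_iff)
  have c: "s \<in> carrier R" "s' \<in> carrier R" "t \<in> carrier R" "t' \<in> carrier R" "u \<in> carrier R"
    "v \<in> carrier R" using x by auto
  then have "(u \<otimes> v) \<otimes> ((a \<otimes> t \<oplus> b \<otimes> s) \<otimes> (s' \<otimes> t') \<ominus> (a' \<otimes> t' \<oplus> b' \<otimes> s') \<otimes> (s \<otimes> t)) =
      (t \<otimes> t' \<otimes> v) \<otimes> (u \<otimes> (a \<otimes> s' \<ominus> a' \<otimes> s)) \<oplus> (s \<otimes> s' \<otimes> u) \<otimes> (v \<otimes> (b \<otimes> t' \<ominus> b' \<otimes> t))"
    using x(1-4) by algebra
  also have "\<dots> = \<zero>" using x c by simp
  finally show ?thesis using x by (subst frac_eq_iff) (auto intro!: bexI[of _ "u \<otimes> v"])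
qed

lemma frac_mult:
  assumes "a \<in> carrier R" "b \<in> carrier R" "s \<in> S" "t \<in> S"
  shows "frac R S a s \<otimes>\<^bsub>loc_ring R S\<^esub> frac R S b t = frac R S (a \<otimes> b) (s \<otimes> t)"
proof -
  have "{frac R S (a' \<otimes> b') (s' \<otimes> t') | a' s' b' t'. (a', s') \<in> frac R S a s \<and> (b', t') \<in> frac R S b t}
      = {frac R S (a \<otimes> b) (s \<otimes> t)}"
    using frac_mult_cong[symmetric] self_mem_frac[of a s] self_mem_frac[of b t] assms
    unfolding mem_frac_iff by blast
  then show ?thesis unfolding loc_ring_def by simp
qed

lemma frac_add:
  assumes "a \<in> carrier R" "b \<in> carrier R" "s \<in> S" "t \<in> S"
  shows "frac R S a s \<oplus>\<^bsub>loc_ring R S\<^esub> frac R S b t = frac R S (a \<otimes> t \<oplus> b \<otimes> s) (s \<otimes> t)"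
proof -
  have "{frac R S (a' \<otimes> t' \<oplus> b' \<otimes> s') (s' \<otimes> t') | a' s' b' t'.
          (a', s') \<in> frac R S a s \<and> (b', t') \<in> frac R S b t}
      = {frac R S (a \<otimes> t \<oplus> b \<otimes> s) (s \<otimes> t)}"
    using frac_add_cong[symmetric] self_mem_frac[of a s] self_mem_frac[of b t] assms
    unfolding mem_frac_iff by blast
  then show ?thesis unfolding loc_ring_def by simp
qed

lemma loc_ring_zero: "\<zero>\<^bsub>loc_ring R S\<^esub> = frac R S \<zero> \<one>"
  unfolding loc_ring_def by simp

lemma loc_ring_one: "\<one>\<^bsub>loc_ring R S\<^esub> = frac R S \<one> \<one>"
  unfolding loc_ring_def by simp

lemma loc_ring_abelian_group: "abelian_group (loc_ring R S)"
proof (rule abelian_groupI)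
  fix X Y Z
  assume "X \<in> carrier (loc_ring R S)" "Y \<in> carrier (loc_ring R S)" "Z \<in> carrier (loc_ring R S)"
  then obtain a s b t c r where x: "a \<in> carrier R" "b \<in> carrier R" "c \<in> carrier R"
      "s \<in> S" "t \<in> S" "r \<in> S"
    and e: "X = frac R S a s" "Y = frac R S b t" "Z = frac R S c r"
    by (metis loc_ring_cases)
  have c: "s \<in> carrier R" "t \<in> carrier R" "r \<in> carrier R" using x by auto
  show "X \<oplus>\<^bsub>loc_ring R S\<^esub> Y \<in> carrier (loc_ring R S)"
    unfolding e using x by (simp add: frac_add)
  show "X \<oplus>\<^bsub>loc_ring R S\<^esub> Y \<oplus>\<^bsub>loc_ring R S\<^esub> Z = X \<oplus>\<^bsub>loc_ring R S\<^esub> (Y \<oplus>\<^bsub>loc_ring R S\<^esub> Z)"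
    unfolding e using x c
    by (simp add: frac_add) (rule frac_eqI, use x c in auto, use x c in algebra)
  show "X \<oplus>\<^bsub>loc_ring R S\<^esub> Y = Y \<oplus>\<^bsub>loc_ring R S\<^esub> X"
    unfolding e using x c
    by (simp add: frac_add) (rule frac_eqI, use x c in auto, use x c in algebra)
  show "\<zero>\<^bsub>loc_ring R S\<^esub> \<oplus>\<^bsub>loc_ring R S\<^esub> X = X"
    unfolding e loc_ring_zero using x by (simp add: frac_add)
  have "frac R S (\<ominus> a) s \<oplus>\<^bsub>loc_ring R S\<^esub> X = \<zero>\<^bsub>loc_ring R S\<^esub>"
    unfolding e loc_ring_zero using x c
    by (simp add: frac_add) (rule frac_eqI, use x c in auto, use x c in algebra)
  then show "\<exists>Y'\<in>carrier (loc_ring R S). Y' \<oplus>\<^bsub>loc_ring R S\<^esub> X = \<zero>\<^bsub>loc_ring R S\<^esub>"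
    using x by blast
next
  show "\<zero>\<^bsub>loc_ring R S\<^esub> \<in> carrier (loc_ring R S)" by (simp add: loc_ring_zero)
qed

lemma loc_ring_comm_monoid: "comm_monoid (loc_ring R S)"
proof (rule comm_monoidI)
  fix X Y Z
  assume "X \<in> carrier (loc_ring R S)" "Y \<in> carrier (loc_ring R S)" "Z \<in> carrier (loc_ring R S)"
  then obtain a s b t c r where x: "a \<in> carrier R" "b \<in> carrier R" "c \<in> carrier R"
      "s \<in> S" "t \<in> S" "r \<in> S"
    and e: "X = frac R S a s" "Y = frac R S b t" "Z = frac R S c r"
    by (metis loc_ring_cases)
  show "X \<otimes>\<^bsub>loc_ring R S\<^esub> Y \<in> carrier (loc_ring R S)"
    unfolding e using x by (simp add: frac_mult)
  show "X \<otimes>\<^bsub>loc_ring R S\<^esub> Y \<otimes>\<^bsub>loc_ring R S\<^esub> Z = X \<otimes>\<^bsub>loc_ring R S\<^esub> (Y \<otimes>\<^bsub>loc_ring R S\<^esub> Z)"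
    unfolding e using x by (simp add: frac_mult m_assoc)
  show "\<one>\<^bsub>loc_ring R S\<^esub> \<otimes>\<^bsub>loc_ring R S\<^esub> X = X"
    unfolding e loc_ring_one using x by (simp add: frac_mult)
  show "X \<otimes>\<^bsub>loc_ring R S\<^esub> Y = Y \<otimes>\<^bsub>loc_ring R S\<^esub> X"
    unfolding e using x by (simp add: frac_mult m_comm)
next
  show "\<one>\<^bsub>loc_ring R S\<^esub> \<in> carrier (loc_ring R S)" by (simp add: loc_ring_one)
qed

lemma cring_loc_ring: "cring (loc_ring R S)"
proof (rule cringI[OF loc_ring_abelian_group loc_ring_comm_monoid])
  fix X Y Z
  assume "X \<in> carrier (loc_ring R S)" "Y \<in> carrier (loc_ring R S)" "Z \<in> carrier (loc_ring R S)"
  then obtain a s b t c r where x: "a \<in> carrier R" "b \<in> carrier R" "c \<in> carrier R"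
      "s \<in> S" "t \<in> S" "r \<in> S"
    and e: "X = frac R S a s" "Y = frac R S b t" "Z = frac R S c r"
    by (metis loc_ring_cases)
  have c: "s \<in> carrier R" "t \<in> carrier R" "r \<in> carrier R" using x by auto
  show "(X \<oplus>\<^bsub>loc_ring R S\<^esub> Y) \<otimes>\<^bsub>loc_ring R S\<^esub> Z
      = X \<otimes>\<^bsub>loc_ring R S\<^esub> Z \<oplus>\<^bsub>loc_ring R S\<^esub> Y \<otimes>\<^bsub>loc_ring R S\<^esub> Z"
    unfolding e using x c
    by (simp add: frac_mult frac_add) (rule frac_eqI, use x c in auto, use x c in algebra)
qed

lemma frac_uminus:
  assumes "a \<in> carrier R" "s \<in> S"
  shows "\<ominus>\<^bsub>loc_ring R S\<^esub> frac R S a s = frac R S (\<ominus> a) s"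
proof -
  interpret L: cring "loc_ring R S" by (rule cring_loc_ring)
  have s: "s \<in> carrier R" using assms(2) by simp
  have "frac R S (\<ominus> a) s \<oplus>\<^bsub>loc_ring R S\<^esub> frac R S a s = \<zero>\<^bsub>loc_ring R S\<^esub>"
    unfolding loc_ring_zero using assms
    by (simp add: frac_add) (rule frac_eqI, use assms in auto, use assms(1) s in algebra)
  then show ?thesis using assms by (simp add: L.minus_equality)
qed

lemma frac_one_ring_hom: "(\<lambda>a. frac R S a \<one>) \<in> ring_hom R (loc_ring R S)"
  by (rule ring_hom_memI) (simp_all add: frac_mult frac_add loc_ring_one)

end

section \<open>The ring \<open>B = A\<^sub>p / q\<^sub>p\<close>\<close>

locale primary_localization = cring +
  fixes p q
  assumes primeideal_p: "primeideal p R" and primary_q: "primary_ideal R q"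
    and radical_q: "radical R q = p"
begin

abbreviation "Ap \<equiv> loc_ring R (carrier R - p)"
abbreviation "qp \<equiv> ext_ideal_loc R p q"

lemma ideal_q: "ideal q R"
  using primary_q unfolding primary_ideal_def by auto

lemma q_subset: "q \<subseteq> carrier R"
  using ideal.Icarr[OF ideal_q] by blast

lemma submonoid_compl_p: "submonoid (carrier R - p) R"
proof
  show "\<one> \<in> carrier R - p"
    using primeideal.I_notcarr[OF primeideal_p] ideal.one_imp_carrier[OF primeideal.axioms(1)[OF primeideal_p]]
    by blast
qed (use primeideal.I_prime[OF primeideal_p] in auto)

sublocale loc: localization R "carrier R - p"
  by (simp add: localization_def localization_axioms_def is_cring submonoid_compl_p)

(* For S = carrier R - p the premise of this conditional simp rule unfolds to its conclusion. *)
declare loc.S_carrier [simp del]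

lemma one_notin_p [simp]: "\<one> \<notin> p"
  using loc.S.one_closed by simp

lemma mult_notin_p [simp]: "\<lbrakk>s \<in> carrier R; t \<in> carrier R; s \<notin> p; t \<notin> p\<rbrakk> \<Longrightarrow> s \<otimes> t \<notin> p"
  using loc.S.m_closed[of s t] by simp

lemma primary_q_cancel: "\<lbrakk>c \<in> carrier R; s \<in> carrier R - p; c \<otimes> s \<in> q\<rbrakk> \<Longrightarrow> c \<in> q"
  using primary_q radical_q unfolding primary_ideal_def radical_def by blast

lemma mem_qp_iff: "X \<in> qp \<longleftrightarrow> (\<exists>a\<in>q. \<exists>s\<in>carrier R - p. X = frac R (carrier R - p) a s)"
  unfolding ext_ideal_loc_def by auto

lemma frac_mem_qpI: "\<lbrakk>a \<in> q; s \<in> carrier R - p\<rbrakk> \<Longrightarrow> frac R (carrier R - p) a s \<in> qp"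
  unfolding mem_qp_iff by blast

lemma ideal_qp: "ideal qp Ap"
proof -
  interpret Ap: cring Ap by (rule loc.cring_loc_ring)
  interpret q: ideal q R by (rule ideal_q)
  show ?thesis
  proof (rule idealI[OF Ap.ring_axioms])
    show "subgroup qp (add_monoid Ap)"
    proof (rule Ap.add.subgroupI)
      show "qp \<subseteq> carrier Ap" using q_subset unfolding ext_ideal_loc_def by auto
      show "qp \<noteq> {}" using frac_mem_qpI[OF q.zero_closed loc.S.one_closed] by blast
    next
      fix X Y assume "X \<in> qp" "Y \<in> qp"
      then obtain a s b t where x: "a \<in> q" "b \<in> q" "s \<in> carrier R - p" "t \<in> carrier R - p"
        and e: "X = frac R (carrier R - p) a s" "Y = frac R (carrier R - p) b t"
        by (auto simp: mem_qp_iff)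
      have "a \<in> carrier R" "b \<in> carrier R" "s \<in> carrier R" "t \<in> carrier R"
        "s \<otimes> t \<in> carrier R - p"
        using x q_subset loc.S.m_closed[OF x(3,4)] by auto
      then show "\<ominus>\<^bsub>Ap\<^esub> X \<in> qp" "X \<oplus>\<^bsub>Ap\<^esub> Y \<in> qp"
        unfolding e using x
        by (simp_all add: loc.frac_uminus loc.frac_add frac_mem_qpI q.a_inv_closed q.a_closed q.I_r_closed)
    qed
  next
    fix X Y assume "X \<in> qp" "Y \<in> carrier Ap"
    then obtain a s b t where x: "a \<in> q" "b \<in> carrier R" "s \<in> carrier R - p" "t \<in> carrier R - p"
      and e: "X = frac R (carrier R - p) a s" "Y = frac R (carrier R - p) b t"
      by (auto simp: mem_qp_iff elim: loc.loc_ring_cases)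
    have "a \<in> carrier R" "s \<otimes> t \<in> carrier R - p" "t \<otimes> s \<in> carrier R - p"
      using x(1) q_subset loc.S.m_closed[OF x(3,4)] loc.S.m_closed[OF x(4,3)] by auto
    then show "Y \<otimes>\<^bsub>Ap\<^esub> X \<in> qp" "X \<otimes>\<^bsub>Ap\<^esub> Y \<in> qp"
      unfolding e using x by (simp_all add: loc.frac_mult frac_mem_qpI q.I_l_closed q.I_r_closed)
  qed
qed

lemma B_ring_eq: "B_ring R p q = Ap Quot qp"
  unfolding B_ring_def loc_at_def by simp

lemma cring_B_ring: "cring (B_ring R p q)"
  unfolding B_ring_eq by (rule ideal.quotient_is_cring[OF ideal_qp loc.cring_loc_ring])

lemma to_B_eq: "to_B R p q a = qp +>\<^bsub>Ap\<^esub> frac R (carrier R - p) a \<one>"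
  unfolding to_B_def loc_at_def by simp

lemma rcos_ring_hom_B_ring: "(+>\<^bsub>Ap\<^esub>) qp \<in> ring_hom Ap (B_ring R p q)"
  unfolding B_ring_eq by (rule ideal.rcos_ring_hom[OF ideal_qp])

lemma to_B_ring_hom: "to_B R p q \<in> ring_hom R (B_ring R p q)"
proof -
  have "(+>\<^bsub>Ap\<^esub>) qp \<circ> (\<lambda>a. frac R (carrier R - p) a \<one>) = to_B R p q"
    by (auto simp: to_B_eq)
  then show ?thesis
    using ring_hom_trans[OF loc.frac_one_ring_hom rcos_ring_hom_B_ring] by simp
qed

lemma frac_one_mem_qp_iff:
  assumes c: "c \<in> carrier R"
  shows "frac R (carrier R - p) c \<one> \<in> qp \<longleftrightarrow> c \<in> q"
proof
  assume "frac R (carrier R - p) c \<one> \<in> qp"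
  then obtain a s where a: "a \<in> q" and s: "s \<in> carrier R" "s \<notin> p"
    and eq: "frac R (carrier R - p) c \<one> = frac R (carrier R - p) a s"
    by (auto simp: mem_qp_iff)
  have ac: "a \<in> carrier R" using a q_subset by blast
  obtain u where u: "u \<in> carrier R" "u \<notin> p" "u \<otimes> (c \<otimes> s \<ominus> a \<otimes> \<one>) = \<zero>"
    using eq loc.frac_eq_iff[of c a \<one> s] c ac s by auto
  have "c \<otimes> (s \<otimes> u) = u \<otimes> (c \<otimes> s \<ominus> a \<otimes> \<one>) \<oplus> u \<otimes> a"
    using u(1) s(1) ac c by algebra
  also have "\<dots> = u \<otimes> a" using u ac by simp
  finally have "c \<otimes> (s \<otimes> u) \<in> q" using ideal.I_l_closed[OF ideal_q a u(1)] by simp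
  then show "c \<in> q" using primary_q_cancel[OF c, of "s \<otimes> u"] s u by simp
next
  assume "c \<in> q"
  then show "frac R (carrier R - p) c \<one> \<in> qp" by (simp add: frac_mem_qpI)
qed

lemma to_B_eq_zero_iff:
  assumes c: "c \<in> carrier R"
  shows "to_B R p q c = \<zero>\<^bsub>B_ring R p q\<^esub> \<longleftrightarrow> c \<in> q"
proof -
  interpret Ap: cring Ap by (rule loc.cring_loc_ring)
  have "frac R (carrier R - p) c \<one> \<in> carrier Ap" using c by simp
  then have "qp +>\<^bsub>Ap\<^esub> frac R (carrier R - p) c \<one> = qp \<longleftrightarrow> frac R (carrier R - p) c \<one> \<in> qp"
    using ideal.rcos_const_imp_mem[OF ideal_qp] Ap.a_rcos_zero[OF ideal_qp] by blast
  then show ?thesis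
    unfolding to_B_eq B_ring_eq FactRing_def using frac_one_mem_qp_iff[OF c] by simp
qed

lemma to_B_Units:
  assumes "s \<in> carrier R - p"
  shows "to_B R p q s \<in> Units (B_ring R p q)"
proof -
  interpret B: cring "B_ring R p q" by (rule cring_B_ring)
  have s: "s \<in> carrier R" "s \<notin> p" using assms by auto
  let ?v = "qp +>\<^bsub>Ap\<^esub> frac R (carrier R - p) \<one> s"
  have "frac R (carrier R - p) \<one> s \<otimes>\<^bsub>Ap\<^esub> frac R (carrier R - p) s \<one> = \<one>\<^bsub>Ap\<^esub>"
    using s by (simp add: loc.frac_mult loc.loc_ring_one) (rule loc.frac_eqI, auto simp: m_comm)
  then have "?v \<otimes>\<^bsub>B_ring R p q\<^esub> to_B R p q s = \<one>\<^bsub>B_ring R p q\<^esub>"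
    using s ring_hom_mult[OF rcos_ring_hom_B_ring, symmetric] ring_hom_one[OF rcos_ring_hom_B_ring]
    by (simp add: to_B_eq)
  moreover have "?v \<in> carrier (B_ring R p q)" "to_B R p q s \<in> carrier (B_ring R p q)"
    using s ring_hom_closed[OF rcos_ring_hom_B_ring] ring_hom_closed[OF to_B_ring_hom] by auto
  ultimately show ?thesis unfolding Units_def using B.m_comm[of ?v "to_B R p q s"] by auto
qed

lemma to_B_fraction:
  assumes y: "y \<in> carrier (B_ring R p q)"
  shows "\<exists>s\<in>carrier R - p. \<exists>a\<in>carrier R. to_B R p q s \<otimes>\<^bsub>B_ring R p q\<^esub> y = to_B R p q a"
proof -
  obtain X where X: "X \<in> carrier Ap" "y = qp +>\<^bsub>Ap\<^esub> X"
    using y unfolding B_ring_eq FactRing_def A_RCOSETS_def' by auto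
  obtain a s where a: "a \<in> carrier R" and s: "s \<in> carrier R" "s \<notin> p"
    and X_eq: "X = frac R (carrier R - p) a s"
    using X(1) by (auto elim: loc.loc_ring_cases)
  have "frac R (carrier R - p) s \<one> \<otimes>\<^bsub>Ap\<^esub> X = frac R (carrier R - p) a \<one>"
    unfolding X_eq using a s by (simp add: loc.frac_mult) (rule loc.frac_eqI, auto simp: m_comm)
  then have "to_B R p q s \<otimes>\<^bsub>B_ring R p q\<^esub> y = to_B R p q a"
    using a s X ring_hom_mult[OF rcos_ring_hom_B_ring, symmetric] by (simp add: to_B_eq)
  then show ?thesis using a s by blast
qed

end

section \<open>Polynomial rings\<close>

lemma carrier_mpoly_ring:
  "f \<in> carrier (mpoly_ring R n) \<longleftrightarrow> (\<forall>E. f E \<in> carrier R) \<and>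
     (\<forall>E. E \<notin> monoms n \<longrightarrow> f E = \<zero>\<^bsub>R\<^esub>) \<and> finite {E. f E \<noteq> \<zero>\<^bsub>R\<^esub>}"
  unfolding mpoly_ring_def by simp

lemma mpoly_ring_add: "f \<oplus>\<^bsub>mpoly_ring R n\<^esub> g = (\<lambda>E. f E \<oplus>\<^bsub>R\<^esub> g E)"
  unfolding mpoly_ring_def by simp

lemma mpoly_ring_zero: "\<zero>\<^bsub>mpoly_ring R n\<^esub> = (\<lambda>E. \<zero>\<^bsub>R\<^esub>)"
  unfolding mpoly_ring_def by simp

lemma mpoly_ring_one: "\<one>\<^bsub>mpoly_ring R n\<^esub> = (\<lambda>E. if E = 0 then \<one>\<^bsub>R\<^esub> else \<zero>\<^bsub>R\<^esub>)"
  unfolding mpoly_ring_def by simp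

lemma mpoly_ring_mult:
  "f \<otimes>\<^bsub>mpoly_ring R n\<^esub> g = (\<lambda>E. if E \<in> monoms n
     then finsum R (\<lambda>F. f F \<otimes>\<^bsub>R\<^esub> g (E - F)) {F. F \<le> E} else \<zero>\<^bsub>R\<^esub>)"
  unfolding mpoly_ring_def by simp

lemma zero_in_monoms [simp]: "0 \<in> monoms n"
  unfolding monoms_def by simp

lemma finite_divisors_monom:
  assumes E: "E \<in> monoms n"
  shows "finite {F :: nat \<Rightarrow> nat. F \<le> E}"
proof -
  have "inj_on (\<lambda>F. restrict F {..<n}) {F. F \<le> E}"
  proof (rule inj_onI, rule ext)
    fix F G i assume F: "F \<in> {F. F \<le> E}" and G: "G \<in> {F. F \<le> E}"
      and eq: "restrict F {..<n} = restrict G {..<n}"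
    show "F i = G i"
    proof (cases "i < n")
      case True
      then show ?thesis using fun_cong[OF eq, of i] by simp
    next
      case False
      then have "E i = 0" using E unfolding monoms_def by simp
      then show ?thesis using F G unfolding le_fun_def by (metis le_zero_eq mem_Collect_eq)
    qed
  qed
  moreover have "(\<lambda>F. restrict F {..<n}) ` {F. F \<le> E} \<subseteq> PiE {..<n} (\<lambda>i. {..E i})"
    by (intro image_subsetI) (simp add: restrict_PiE_iff le_fun_def)
  then have "finite ((\<lambda>F. restrict F {..<n}) ` {F. F \<le> E})"
    by (rule finite_subset) (auto intro: finite_PiE)
  ultimately show ?thesis using finite_imageD by blast
qed

definition mpoly_monom :: "('a, 'm) ring_scheme \<Rightarrow> (nat \<Rightarrow> nat) \<Rightarrow> (nat \<Rightarrow> nat) \<Rightarrow> 'a" where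
  "mpoly_monom R E = (\<lambda>F. if F = E then \<one>\<^bsub>R\<^esub> else \<zero>\<^bsub>R\<^esub>)"

context cring
begin

lemma mpoly_const_closed: "c \<in> carrier R \<Longrightarrow> mpoly_const R c \<in> carrier (mpoly_ring R n)"
proof -
  assume c: "c \<in> carrier R"
  have "{E. mpoly_const R c E \<noteq> \<zero>} \<subseteq> {0}" by (auto simp: mpoly_const_def)
  then show ?thesis using c finite_subset by (auto simp: carrier_mpoly_ring mpoly_const_def)
qed

lemma mpoly_monom_closed: "E \<in> monoms n \<Longrightarrow> mpoly_monom R E \<in> carrier (mpoly_ring R n)"
proof -
  assume E: "E \<in> monoms n"
  have "{F. mpoly_monom R E F \<noteq> \<zero>} \<subseteq> {E}" by (auto simp: mpoly_monom_def)
  then show ?thesis using E finite_subset by (auto simp: carrier_mpoly_ring mpoly_monom_def)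
qed

lemma mpoly_const_mult:
  assumes c: "c \<in> carrier R" and f: "f \<in> carrier (mpoly_ring R n)"
  shows "mpoly_const R c \<otimes>\<^bsub>mpoly_ring R n\<^esub> f = (\<lambda>E. c \<otimes> f E)"
proof
  fix E
  have fE: "\<And>E. f E \<in> carrier R" "\<And>E. E \<notin> monoms n \<Longrightarrow> f E = \<zero>"
    using f by (auto simp: carrier_mpoly_ring)
  show "(mpoly_const R c \<otimes>\<^bsub>mpoly_ring R n\<^esub> f) E = c \<otimes> f E"
  proof (cases "E \<in> monoms n")
    case True
    have "(\<Oplus>F\<in>{F. F \<le> E}. mpoly_const R c F \<otimes> f (E - F))
        = (\<Oplus>F\<in>{F. F \<le> E}. if 0 = F then c \<otimes> f E else \<zero>)"
      by (rule finsum_cong') (auto simp: mpoly_const_def c fE)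
    also have "\<dots> = c \<otimes> f E"
      using finsum_singleton[of 0 "{F. F \<le> E}" "\<lambda>F. c \<otimes> f E"] finite_divisors_monom[OF True] c fE
      by (simp add: le_fun_def)
    finally show ?thesis using True by (simp add: mpoly_ring_mult)
  qed (simp add: mpoly_ring_mult c fE)
qed

lemma mpoly_mult_scale:
  assumes a: "a \<in> carrier R" and b: "b \<in> carrier R"
    and f: "\<And>E. f E \<in> carrier R" and g: "\<And>E. g E \<in> carrier R"
  shows "(\<lambda>E. a \<otimes> f E) \<otimes>\<^bsub>mpoly_ring R n\<^esub> (\<lambda>E. b \<otimes> g E)
       = (\<lambda>E. (a \<otimes> b) \<otimes> (f \<otimes>\<^bsub>mpoly_ring R n\<^esub> g) E)"
proof
  fix E
  show "((\<lambda>E. a \<otimes> f E) \<otimes>\<^bsub>mpoly_ring R n\<^esub> (\<lambda>E. b \<otimes> g E)) E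
      = (a \<otimes> b) \<otimes> (f \<otimes>\<^bsub>mpoly_ring R n\<^esub> g) E"
  proof (cases "E \<in> monoms n")
    case True
    have "(\<Oplus>F\<in>{F. F \<le> E}. (a \<otimes> f F) \<otimes> (b \<otimes> g (E - F)))
        = (\<Oplus>F\<in>{F. F \<le> E}. (a \<otimes> b) \<otimes> (f F \<otimes> g (E - F)))"
      by (rule finsum_cong') (auto simp: a b f g m_ac)
    also have "\<dots> = (a \<otimes> b) \<otimes> (\<Oplus>F\<in>{F. F \<le> E}. f F \<otimes> g (E - F))"
      by (rule finsum_rdistr[symmetric]) (auto simp: finite_divisors_monom[OF True] a b f g)
    finally show ?thesis using True by (simp add: mpoly_ring_mult)
  qed (simp add: mpoly_ring_mult a b)
qed

lemma mpoly_ring_uminus: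
  assumes P: "ring (mpoly_ring R n)" and f: "f \<in> carrier (mpoly_ring R n)"
  shows "\<ominus>\<^bsub>mpoly_ring R n\<^esub> f = (\<lambda>E. \<ominus> f E)"
proof -
  interpret P: ring "mpoly_ring R n" by (rule P)
  have fE: "\<And>E. f E \<in> carrier R" "\<And>E. E \<notin> monoms n \<Longrightarrow> f E = \<zero>" "finite {E. f E \<noteq> \<zero>}"
    using f by (auto simp: carrier_mpoly_ring)
  have "{E. \<ominus> f E \<noteq> \<zero>} \<subseteq> {E. f E \<noteq> \<zero>}" using fE by auto
  then have "(\<lambda>E. \<ominus> f E) \<in> carrier (mpoly_ring R n)"
    using fE finite_subset by (auto simp: carrier_mpoly_ring)
  moreover have "(\<lambda>E. \<ominus> f E) \<oplus>\<^bsub>mpoly_ring R n\<^esub> f = \<zero>\<^bsub>mpoly_ring R n\<^esub>"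
    using fE by (simp add: mpoly_ring_add mpoly_ring_zero l_neg)
  ultimately show ?thesis using P.minus_equality f by simp
qed

lemma mpoly_mem_ideal_if_coeffs_mem_contract:
  assumes I: "ideal I (mpoly_ring R n)" and f: "f \<in> carrier (mpoly_ring R n)"
    and coeffs: "\<And>E. f E \<in> contract_const R I"
  shows "f \<in> I"
proof -
  interpret I: ideal I "mpoly_ring R n" by (rule I)
  have coeffs': "f E \<in> carrier R" "mpoly_const R (f E) \<in> I" for E
    using coeffs unfolding contract_const_def by auto
  have "(\<lambda>F. if F \<in> X then f F else \<zero>) \<in> I" if "finite X" "X \<subseteq> monoms n" for X
    using that
  proof (induction X rule: finite_induct)
    case empty
    then show ?case
      using additive_subgroup.zero_closed[OF I.is_additive_subgroup] by (simp add: mpoly_ring_zero)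
  next
    case (insert E X)
    have E: "mpoly_monom R E \<in> carrier (mpoly_ring R n)" using insert.prems mpoly_monom_closed by simp
    have "(\<lambda>F. if F \<in> insert E X then f F else \<zero>) =
        (\<lambda>F. if F \<in> X then f F else \<zero>) \<oplus>\<^bsub>mpoly_ring R n\<^esub> (mpoly_const R (f E) \<otimes>\<^bsub>mpoly_ring R n\<^esub> mpoly_monom R E)"
      using insert.hyps coeffs' mpoly_const_mult[OF coeffs'(1) E]
      by (auto simp: mpoly_ring_add mpoly_monom_def)
    also have "\<dots> \<in> I"
      using insert coeffs' E
      by (intro additive_subgroup.a_closed[OF I.is_additive_subgroup] I.I_r_closed) auto
    finally show ?case .
  qed
  moreover have "finite {E. f E \<noteq> \<zero>}" "{E. f E \<noteq> \<zero>} \<subseteq> monoms n"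
    using f by (auto simp: carrier_mpoly_ring)
  ultimately have "(\<lambda>F. if F \<in> {E. f E \<noteq> \<zero>} then f F else \<zero>) \<in> I" by blast
  moreover have "(\<lambda>F. if F \<in> {E. f E \<noteq> \<zero>} then f F else \<zero>) = f" by auto
  ultimately show ?thesis by simp
qed

end

context ring_hom_cring
begin

lemma map_coeffs_closed:
  assumes f: "f \<in> carrier (mpoly_ring R n)"
  shows "map_coeffs h f \<in> carrier (mpoly_ring S n)"
proof -
  have fE: "\<And>E. f E \<in> carrier R" "\<And>E. E \<notin> monoms n \<Longrightarrow> f E = \<zero>" "finite {E. f E \<noteq> \<zero>}"
    using f by (auto simp: carrier_mpoly_ring)
  have "{E. h (f E) \<noteq> \<zero>\<^bsub>S\<^esub>} \<subseteq> {E. f E \<noteq> \<zero>}" using fE by auto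
  then show ?thesis using fE finite_subset by (auto simp: carrier_mpoly_ring map_coeffs_def)
qed

lemma map_coeffs_mult:
  assumes f: "f \<in> carrier (mpoly_ring R n)" and g: "g \<in> carrier (mpoly_ring R n)"
  shows "map_coeffs h (f \<otimes>\<^bsub>mpoly_ring R n\<^esub> g) = map_coeffs h f \<otimes>\<^bsub>mpoly_ring S n\<^esub> map_coeffs h g"
proof
  fix E
  have fE: "\<And>E. f E \<in> carrier R" and gE: "\<And>E. g E \<in> carrier R"
    using f g by (auto simp: carrier_mpoly_ring)
  show "map_coeffs h (f \<otimes>\<^bsub>mpoly_ring R n\<^esub> g) E = (map_coeffs h f \<otimes>\<^bsub>mpoly_ring S n\<^esub> map_coeffs h g) E"
  proof (cases "E \<in> monoms n")
    case True
    have "h (\<Oplus>F\<in>{F. F \<le> E}. f F \<otimes> g (E - F)) = (\<Oplus>\<^bsub>S\<^esub>F\<in>{F. F \<le> E}. h (f F) \<otimes>\<^bsub>S\<^esub> h (g (E - F)))"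
      by (subst hom_finsum) (auto simp: fE gE o_def intro: S.finsum_cong')
    then show ?thesis using True by (simp add: mpoly_ring_mult map_coeffs_def)
  qed (simp add: mpoly_ring_mult map_coeffs_def)
qed

lemma map_coeffs_ring_hom: "map_coeffs h \<in> ring_hom (mpoly_ring R n) (mpoly_ring S n)"
proof (rule ring_hom_memI)
  fix f g assume f: "f \<in> carrier (mpoly_ring R n)" and g: "g \<in> carrier (mpoly_ring R n)"
  show "map_coeffs h f \<in> carrier (mpoly_ring S n)" by (rule map_coeffs_closed[OF f])
  show "map_coeffs h (f \<otimes>\<^bsub>mpoly_ring R n\<^esub> g) = map_coeffs h f \<otimes>\<^bsub>mpoly_ring S n\<^esub> map_coeffs h g"
    by (rule map_coeffs_mult[OF f g])
  show "map_coeffs h (f \<oplus>\<^bsub>mpoly_ring R n\<^esub> g) = map_coeffs h f \<oplus>\<^bsub>mpoly_ring S n\<^esub> map_coeffs h g"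
    using f g by (auto simp: mpoly_ring_add map_coeffs_def carrier_mpoly_ring)
next
  show "map_coeffs h \<one>\<^bsub>mpoly_ring R n\<^esub> = \<one>\<^bsub>mpoly_ring S n\<^esub>"
    by (auto simp: mpoly_ring_one map_coeffs_def)
qed

end

section \<open>Leading monomials and initial terms\<close>

lemma monomial_order_irrefl: "\<lbrakk>monomial_order n gt; E \<in> monoms n\<rbrakk> \<Longrightarrow> \<not> gt E E"
  unfolding monomial_order_def by blast

lemma monomial_order_trans:
  "\<lbrakk>monomial_order n gt; E \<in> monoms n; F \<in> monoms n; G \<in> monoms n; gt E F; gt F G\<rbrakk> \<Longrightarrow> gt E G"
  unfolding monomial_order_def by blast

lemma monomial_order_total:
  "\<lbrakk>monomial_order n gt; E \<in> monoms n; F \<in> monoms n; E \<noteq> F\<rbrakk> \<Longrightarrow> gt E F \<or> gt F E"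
  unfolding monomial_order_def by blast

lemma lead_monom_eqI:
  assumes mo: "monomial_order n gt" and supp: "\<And>E. f E \<noteq> \<zero>\<^bsub>R\<^esub> \<Longrightarrow> E \<in> monoms n"
    and fE: "f E \<noteq> \<zero>\<^bsub>R\<^esub>" and greatest: "\<And>F. f F \<noteq> \<zero>\<^bsub>R\<^esub> \<Longrightarrow> F \<noteq> E \<Longrightarrow> gt E F"
  shows "lead_monom R gt f = E"
  unfolding lead_monom_def
proof (rule the_equality)
  show "f E \<noteq> \<zero>\<^bsub>R\<^esub> \<and> (\<forall>F. f F \<noteq> \<zero>\<^bsub>R\<^esub> \<and> F \<noteq> E \<longrightarrow> gt E F)" using fE greatest by blast
next
  fix E' assume E': "f E' \<noteq> \<zero>\<^bsub>R\<^esub> \<and> (\<forall>F. f F \<noteq> \<zero>\<^bsub>R\<^esub> \<and> F \<noteq> E' \<longrightarrow> gt E' F)"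
  show "E' = E"
  proof (rule ccontr)
    assume "E' \<noteq> E"
    then have "gt E E'" "gt E' E" using greatest E' fE by blast+
    moreover have "E \<in> monoms n" "E' \<in> monoms n" using supp fE E' by blast+
    ultimately show False using monomial_order_trans[OF mo] monomial_order_irrefl[OF mo] by blast
  qed
qed

lemma monomial_order_ex_greatest:
  assumes mo: "monomial_order n gt"
  shows "\<lbrakk>finite X; X \<noteq> {}; X \<subseteq> monoms n\<rbrakk> \<Longrightarrow> \<exists>E\<in>X. \<forall>F\<in>X. F \<noteq> E \<longrightarrow> gt E F"
proof (induction X rule: finite_ne_induct)
  case (singleton x)
  then show ?case by blast
next
  case (insert x X)
  obtain E where E: "E \<in> X" "\<forall>F\<in>X. F \<noteq> E \<longrightarrow> gt E F" using insert by blast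
  have monoms: "x \<in> monoms n" "X \<subseteq> monoms n" using insert.prems by auto
  show ?case
  proof (cases "gt x E")
    case True
    have "gt x F" if "F \<in> X" for F
      using that True E monoms monomial_order_trans[OF mo, of x E F] by (cases "F = E") auto
    then show ?thesis by blast
  next
    case False
    then have "gt E x"
      using insert.hyps E monoms monomial_order_total[OF mo, of x E] by auto
    then show ?thesis using E by blast
  qed
qed

lemma lead_monom_greatest:
  assumes mo: "monomial_order n gt" and f: "f \<in> carrier (mpoly_ring R n)"
    and nz: "f \<noteq> \<zero>\<^bsub>mpoly_ring R n\<^esub>"
  shows "f (lead_monom R gt f) \<noteq> \<zero>\<^bsub>R\<^esub>"
    and "\<And>F. f F \<noteq> \<zero>\<^bsub>R\<^esub> \<Longrightarrow> F \<noteq> lead_monom R gt f \<Longrightarrow> gt (lead_monom R gt f) F"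
    and "lead_monom R gt f \<in> monoms n"
proof -
  let ?X = "{E. f E \<noteq> \<zero>\<^bsub>R\<^esub>}"
  have fin: "finite ?X" and sub: "?X \<subseteq> monoms n" using f by (auto simp: carrier_mpoly_ring)
  have "?X \<noteq> {}" using nz by (auto simp: mpoly_ring_zero)
  then obtain E where E: "E \<in> ?X" "\<forall>F\<in>?X. F \<noteq> E \<longrightarrow> gt E F"
    using monomial_order_ex_greatest[OF mo fin _ sub] by blast
  have "lead_monom R gt f = E"
    by (rule lead_monom_eqI[OF mo]) (use sub E in auto)
  then show "f (lead_monom R gt f) \<noteq> \<zero>\<^bsub>R\<^esub>" "lead_monom R gt f \<in> monoms n"
    "\<And>F. f F \<noteq> \<zero>\<^bsub>R\<^esub> \<Longrightarrow> F \<noteq> lead_monom R gt f \<Longrightarrow> gt (lead_monom R gt f) F"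
    using E sub by auto
qed

lemma lead_monom_cong:
  "(\<And>E. f E \<noteq> \<zero>\<^bsub>R\<^esub> \<longleftrightarrow> g E \<noteq> \<zero>\<^bsub>S\<^esub>) \<Longrightarrow> lead_monom R gt f = lead_monom S gt g"
  unfolding lead_monom_def by simp

context ring
begin

lemma init_term_closed:
  assumes mo: "monomial_order n gt" and f: "f \<in> carrier (mpoly_ring R n)"
  shows "init_term R gt f \<in> carrier (mpoly_ring R n)"
proof (cases "f = \<zero>\<^bsub>mpoly_ring R n\<^esub>")
  case True
  then show ?thesis using f by (simp add: init_term_def mpoly_ring_zero)
next
  case False
  have "{F. init_term R gt f F \<noteq> \<zero>} \<subseteq> {lead_monom R gt f}" by (auto simp: init_term_def)
  then show ?thesis
    using f lead_monom_greatest(3)[OF mo f False] finite_subset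
    by (auto simp: carrier_mpoly_ring init_term_def)
qed

lemma init_term_scale:
  assumes c: "c \<in> carrier R" and supp: "\<And>E. c \<otimes> g E \<noteq> \<zero> \<longleftrightarrow> g E \<noteq> \<zero>"
  shows "init_term R gt (\<lambda>E. c \<otimes> g E) = (\<lambda>E. c \<otimes> init_term R gt g E)"
  using lead_monom_cong[of "\<lambda>E. c \<otimes> g E" R g R gt] supp c by (auto simp: init_term_def)

lemma init_terms_subset:
  assumes mo: "monomial_order n gt" and K: "K \<subseteq> carrier (mpoly_ring R n)"
  shows "{init_term R gt f | f. f \<in> K \<and> f \<noteq> \<zero>\<^bsub>mpoly_ring R n\<^esub>} \<subseteq> carrier (mpoly_ring R n)"
proof
  fix x assume "x \<in> {init_term R gt f | f. f \<in> K \<and> f \<noteq> \<zero>\<^bsub>mpoly_ring R n\<^esub>}"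
  then obtain f where "x = init_term R gt f" "f \<in> K" by blast
  then show "x \<in> carrier (mpoly_ring R n)" using init_term_closed[OF mo] K by auto
qed

lemma ideal_init_ideal:
  assumes "ring (mpoly_ring R n)" and mo: "monomial_order n gt" and K: "K \<subseteq> carrier (mpoly_ring R n)"
  shows "ideal (init_ideal R n gt K) (mpoly_ring R n)"
  unfolding init_ideal_def by (rule ring.genideal_ideal[OF assms(1) init_terms_subset[OF mo K]])

lemma init_term_mem_init_ideal:
  assumes "ring (mpoly_ring R n)" and mo: "monomial_order n gt" and K: "K \<subseteq> carrier (mpoly_ring R n)"
    and "f \<in> K" "f \<noteq> \<zero>\<^bsub>mpoly_ring R n\<^esub>"
  shows "init_term R gt f \<in> init_ideal R n gt K"
proof -
  have "init_term R gt f \<in> {init_term R gt f | f. f \<in> K \<and> f \<noteq> \<zero>\<^bsub>mpoly_ring R n\<^esub>}"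
    using assms(4,5) by blast
  then show ?thesis
    unfolding init_ideal_def using ring.genideal_self[OF assms(1) init_terms_subset[OF mo K]] by blast
qed

end

lemma (in ring_hom_cring) map_coeffs_init_term:
  assumes mo: "monomial_order n gt" and f: "f \<in> carrier (mpoly_ring R n)"
    and lead: "h (f (lead_monom R gt f)) \<noteq> \<zero>\<^bsub>S\<^esub>"
  shows "init_term S gt (map_coeffs h f) = map_coeffs h (init_term R gt f)"
proof -
  have "f \<noteq> \<zero>\<^bsub>mpoly_ring R n\<^esub>" using lead by (auto simp: mpoly_ring_zero)
  note greatest = lead_monom_greatest[OF mo f this]
  have "lead_monom S gt (map_coeffs h f) = lead_monom R gt f"
  proof (rule lead_monom_eqI[OF mo])
    show "E \<in> monoms n" if "map_coeffs h f E \<noteq> \<zero>\<^bsub>S\<^esub>" for E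
      using that map_coeffs_closed[OF f] by (auto simp: carrier_mpoly_ring)
    show "map_coeffs h f (lead_monom R gt f) \<noteq> \<zero>\<^bsub>S\<^esub>" using lead by (simp add: map_coeffs_def)
    show "gt (lead_monom R gt f) F" if "map_coeffs h f F \<noteq> \<zero>\<^bsub>S\<^esub>" "F \<noteq> lead_monom R gt f" for F
      using that greatest(2)[of F] by (cases "f F = \<zero>") (auto simp: map_coeffs_def)
  qed
  then show ?thesis by (auto simp: init_term_def map_coeffs_def)
qed

lemma (in ring_hom_cring) map_coeffs_init_term_mem:
  assumes mo: "monomial_order n gt" and PR: "ring (mpoly_ring R n)" and PS: "ring (mpoly_ring S n)"
    and I: "I \<subseteq> carrier (mpoly_ring R n)" and f: "f \<in> I" "f \<noteq> \<zero>\<^bsub>mpoly_ring R n\<^esub>"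
  shows "map_coeffs h (init_term R gt f)
           \<in> init_ideal S n gt (genideal (mpoly_ring S n) (map_coeffs h ` I))"
proof -
  interpret PS: ring "mpoly_ring S n" by (rule PS)
  let ?K = "genideal (mpoly_ring S n) (map_coeffs h ` I)"
  have image: "map_coeffs h ` I \<subseteq> carrier (mpoly_ring S n)" using I map_coeffs_closed by blast
  then have K: "?K \<subseteq> carrier (mpoly_ring S n)" using ideal.Icarr[OF PS.genideal_ideal] by blast
  show ?thesis
  proof (cases "h (f (lead_monom R gt f)) = \<zero>\<^bsub>S\<^esub>")
    case True
    then have "map_coeffs h (init_term R gt f) = \<zero>\<^bsub>mpoly_ring S n\<^esub>"
      by (auto simp: map_coeffs_def init_term_def mpoly_ring_zero)
    then show ?thesis
      using additive_subgroup.zero_closed[OF ideal.axioms(1)[OF S.ideal_init_ideal[OF PS mo K]]]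
      by simp
  next
    case False
    have fc: "f \<in> carrier (mpoly_ring R n)" using I f by blast
    have "map_coeffs h f \<in> ?K" using PS.genideal_self[OF image] f by blast
    moreover have "map_coeffs h f \<noteq> \<zero>\<^bsub>mpoly_ring S n\<^esub>"
      using False by (auto simp: map_coeffs_def mpoly_ring_zero dest: fun_cong)
    ultimately show ?thesis
      using S.init_term_mem_init_ideal[OF PS mo K] map_coeffs_init_term[OF mo fc False] by metis
  qed
qed

lemma (in ring_hom_cring) genideal_map_coeffs_init_ideal_subset:
  assumes mo: "monomial_order n gt" and PR: "ring (mpoly_ring R n)" and PS: "ring (mpoly_ring S n)"
    and I: "I \<subseteq> carrier (mpoly_ring R n)"
  shows "genideal (mpoly_ring S n) (map_coeffs h ` init_ideal R n gt I)
           \<subseteq> init_ideal S n gt (genideal (mpoly_ring S n) (map_coeffs h ` I))"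
proof -
  interpret PR: ring "mpoly_ring R n" by (rule PR)
  interpret PS: ring "mpoly_ring S n" by (rule PS)
  interpret hom: ring_hom_ring "mpoly_ring R n" "mpoly_ring S n" "map_coeffs h"
    by (rule ring_hom_ringI2[OF PR PS map_coeffs_ring_hom])
  let ?J = "init_ideal S n gt (genideal (mpoly_ring S n) (map_coeffs h ` I))"
  have "map_coeffs h ` I \<subseteq> carrier (mpoly_ring S n)" using I map_coeffs_closed by blast
  then have J: "ideal ?J (mpoly_ring S n)"
    using S.ideal_init_ideal[OF PS mo] ideal.Icarr[OF PS.genideal_ideal] by blast
  have "init_ideal R n gt I \<subseteq> {f \<in> carrier (mpoly_ring R n). map_coeffs h f \<in> ?J}"
    by (subst init_ideal_def, rule PR.genideal_minimal[OF hom.ideal_vimage[OF J]])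
      (use I map_coeffs_init_term_mem[OF mo PR PS I] R.init_term_closed[OF mo] in blast)
  then show ?thesis by (intro PS.genideal_minimal[OF J]) blast
qed

section \<open>Isolated primary components\<close>

context cring
begin

lemma ideal_colon: "\<lbrakk>ideal K R; a \<in> carrier R\<rbrakk> \<Longrightarrow> ideal {x \<in> carrier R. x \<otimes> a \<in> K} R"
proof -
  assume K: "ideal K R" and a: "a \<in> carrier R"
  interpret K: ideal K R by (rule K)
  show ?thesis
  proof (rule idealI[OF ring_axioms])
    show "subgroup {x \<in> carrier R. x \<otimes> a \<in> K} (add_monoid R)"
    proof (rule add.subgroupI)
      show "{x \<in> carrier R. x \<otimes> a \<in> K} \<noteq> {}" using a by auto
    qed (use a in \<open>auto simp: l_minus l_distr\<close>)
  next
    fix x y assume "x \<in> {x \<in> carrier R. x \<otimes> a \<in> K}" "y \<in> carrier R"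
    then show "y \<otimes> x \<in> {x \<in> carrier R. x \<otimes> a \<in> K}" "x \<otimes> y \<in> {x \<in> carrier R. x \<otimes> a \<in> K}"
      using a by (auto simp: m_assoc K.I_l_closed) (metis K.I_l_closed m_assoc m_comm m_closed)
  qed
qed

text \<open>Induction on the total exponent, passing to the colon ideals of \<open>K\<close> by \<open>a\<close> and by \<open>b\<close>;
  this replaces the binomial theorem.\<close>

lemma pow_add_mem_ideal:
  "\<lbrakk>ideal K R; a \<in> carrier R; b \<in> carrier R; a [^] (k::nat) \<in> K; b [^] (l::nat) \<in> K\<rbrakk>
     \<Longrightarrow> (a \<oplus> b) [^] (k + l) \<in> K"
proof (induction "k + l" arbitrary: k l K)
  case 0
  then have "K = carrier R" using ideal.one_imp_carrier by force
  then show ?case using 0 by simp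
next
  case (Suc m)
  show ?case
  proof (cases "k = 0 \<or> l = 0")
    case True
    then have "K = carrier R" using Suc ideal.one_imp_carrier by force
    then show ?thesis using Suc by simp
  next
    case False
    then obtain k' l' where kl: "k = Suc k'" "l = Suc l'" by (metis not0_implies_Suc)
    let ?Ka = "{x \<in> carrier R. x \<otimes> a \<in> K}" and ?Kb = "{x \<in> carrier R. x \<otimes> b \<in> K}"
    have "ideal ?Ka R" "ideal ?Kb R" using ideal_colon Suc by auto
    moreover have "a [^] k' \<in> ?Ka" "b [^] l \<in> ?Ka" "a [^] k \<in> ?Kb" "b [^] l' \<in> ?Kb"
      using Suc kl ideal.I_r_closed[OF Suc(3)] by auto
    ultimately have "(a \<oplus> b) [^] m \<in> ?Ka" "(a \<oplus> b) [^] m \<in> ?Kb"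
      using Suc.hyps(1)[of k' l] Suc.hyps(1)[of k l'] Suc kl by auto
    then have "(a \<oplus> b) [^] m \<otimes> a \<oplus> (a \<oplus> b) [^] m \<otimes> b \<in> K"
      using additive_subgroup.a_closed[OF ideal.axioms(1)[OF Suc(3)]] by auto
    moreover have "(a \<oplus> b) [^] Suc m = (a \<oplus> b) [^] m \<otimes> a \<oplus> (a \<oplus> b) [^] m \<otimes> b"
      using Suc.prems(2,3) by (simp add: r_distr)
    ultimately show ?thesis using Suc.hyps(2) by simp
  qed
qed

lemma primeideal_mem_if_pow_mem:
  "\<lbrakk>primeideal P R; x \<in> carrier R; x [^] (k::nat) \<in> P\<rbrakk> \<Longrightarrow> x \<in> P"
proof (induction k)
  case 0
  then show ?case
    using ideal.one_imp_carrier[OF primeideal.axioms(1)] primeideal.I_notcarr by fastforce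
next
  case (Suc k)
  then show ?case using primeideal.I_prime[OF Suc(2), of "x [^] k" x] by auto
qed

lemma ideal_radical:
  assumes "ideal Q R"
  shows "ideal (radical R Q) R"
proof -
  interpret Q: ideal Q R by (rule assms)
  show ?thesis
  proof (rule idealI[OF ring_axioms])
    show "subgroup (radical R Q) (add_monoid R)"
    proof (rule add.subgroupI)
      show "radical R Q \<subseteq> carrier R" unfolding radical_def by auto
      have "\<zero> [^] (1::nat) \<in> Q" by simp
      then show "radical R Q \<noteq> {}" unfolding radical_def by blast
    next
      fix x y assume "x \<in> radical R Q" "y \<in> radical R Q"
      then obtain k l where x: "x \<in> carrier R" "x [^] (k::nat) \<in> Q"
        and y: "y \<in> carrier R" "y [^] (l::nat) \<in> Q"
        unfolding radical_def by blast
      have "(\<ominus> x) [^] k = ((\<ominus> \<one>) \<otimes> x) [^] k" using x by (simp add: l_minus)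
      also have "\<dots> = (\<ominus> \<one>) [^] k \<otimes> x [^] k" using x by (simp add: nat_pow_distrib)
      finally have "(\<ominus> x) [^] k \<in> Q" using x Q.I_l_closed by simp
      moreover have "(x \<oplus> y) [^] (k + l) \<in> Q" using pow_add_mem_ideal[OF assms] x y by blast
      ultimately show "\<ominus> x \<in> radical R Q" "x \<oplus> y \<in> radical R Q"
        using x y unfolding radical_def by auto
    qed
  next
    fix a x assume "a \<in> radical R Q" "x \<in> carrier R"
    then obtain k where a: "a \<in> carrier R" "a [^] (k::nat) \<in> Q" and x: "x \<in> carrier R"
      unfolding radical_def by blast
    have "(x \<otimes> a) [^] k \<in> Q" "(a \<otimes> x) [^] k \<in> Q"
      using a x Q.I_l_closed by (simp_all add: nat_pow_distrib m_comm)
    then show "x \<otimes> a \<in> radical R Q" "a \<otimes> x \<in> radical R Q"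
      using a x unfolding radical_def by auto
  qed
qed

lemma primeideal_radical:
  assumes "primary_ideal R Q"
  shows "primeideal (radical R Q) R"
proof -
  have Q: "ideal Q R" "Q \<noteq> carrier R"
    and primary: "\<And>a b. \<lbrakk>a \<in> carrier R; b \<in> carrier R; a \<otimes> b \<in> Q\<rbrakk> \<Longrightarrow> a \<in> Q \<or> (\<exists>k::nat. b [^] k \<in> Q)"
    using assms unfolding primary_ideal_def by auto
  show ?thesis
  proof (rule primeidealI[OF ideal_radical[OF Q(1)] is_cring])
    show "carrier R \<noteq> radical R Q"
    proof
      assume "carrier R = radical R Q"
      then have "\<one> \<in> radical R Q" using one_closed by blast
      then obtain k :: nat where "\<one> [^] k \<in> Q" unfolding radical_def by blast
      then show False using ideal.one_imp_carrier[OF Q(1)] Q(2) by simp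
    qed
  next
    fix a b assume a: "a \<in> carrier R" and b: "b \<in> carrier R" and "a \<otimes> b \<in> radical R Q"
    then obtain k :: nat where "(a \<otimes> b) [^] k \<in> Q" unfolding radical_def by blast
    then have "a [^] k \<otimes> b [^] k \<in> Q" using a b by (simp add: nat_pow_distrib)
    then have "a [^] k \<in> Q \<or> (\<exists>m::nat. (b [^] k) [^] m \<in> Q)" using primary a b by simp
    then show "a \<in> radical R Q \<or> b \<in> radical R Q"
      using a b unfolding radical_def by (auto simp: nat_pow_pow)
  qed
qed

lemma ex_notin_prime_mem_ideals:
  assumes P: "primeideal P R" and "finite F"
    and "\<And>Q. Q \<in> F \<Longrightarrow> ideal Q R" and "\<And>Q. Q \<in> F \<Longrightarrow> \<not> Q \<subseteq> P"
  shows "\<exists>u\<in>carrier R - P. \<forall>Q\<in>F. u \<in> Q"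
  using assms(2-4)
proof (induction F rule: finite_induct)
  case empty
  have "\<one> \<notin> P"
    using ideal.one_imp_carrier[OF primeideal.axioms(1)[OF P]] primeideal.I_notcarr[OF P] by blast
  then show ?case by auto
next
  case (insert Q F)
  then obtain u where u: "u \<in> carrier R" "u \<notin> P" "\<forall>Q'\<in>F. u \<in> Q'" by auto
  obtain w where w: "w \<in> Q" "w \<notin> P" using insert.prems(2) by blast
  have Q: "ideal Q R" using insert.prems(1) by blast
  have wc: "w \<in> carrier R" using ideal.Icarr[OF Q w(1)] .
  have "u \<otimes> w \<notin> P" using primeideal.I_prime[OF P u(1) wc] u w by blast
  moreover have "u \<otimes> w \<in> Q" using ideal.I_l_closed[OF Q w(1) u(1)] .
  moreover have "u \<otimes> w \<in> Q'" if "Q' \<in> F" for Q'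
    using ideal.I_r_closed[OF _ _ wc] insert.prems(1) u(3) that by blast
  ultimately show ?case using u wc by blast
qed

lemma primary_component_not_subset_isolated_prime:
  assumes dec: "minimal_primary_decomposition R Qs J" and q: "q \<in> Qs"
    and Q: "Q \<in> Qs" "Q \<noteq> q" and min: "minimal_prime_of R (radical R q) J"
  shows "\<not> Q \<subseteq> radical R q"
proof
  assume sub: "Q \<subseteq> radical R q"
  have primary: "primary_ideal R Q" and J: "J \<subseteq> Q" and inj: "inj_on (radical R) Qs"
    using dec Q unfolding minimal_primary_decomposition_def by auto
  have prime: "primeideal (radical R q) R" using min unfolding minimal_prime_of_def by blast
  have "radical R Q \<subseteq> radical R q"
    using sub primeideal_mem_if_pow_mem[OF prime] unfolding radical_def by blast
  moreover have "J \<subseteq> radical R Q"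
  proof
    fix x assume "x \<in> J"
    then have x: "x \<in> Q" using J by blast
    moreover have "x \<in> carrier R"
      using ideal.Icarr[OF _ x] primary unfolding primary_ideal_def by blast
    ultimately have "x \<in> carrier R" "x [^] (1::nat) \<in> Q" by simp_all
    then show "x \<in> radical R Q" unfolding radical_def by blast
  qed
  ultimately have "radical R Q = radical R q"
    using min primeideal_radical[OF primary] unfolding minimal_prime_of_def by blast
  then show False using inj q Q unfolding inj_on_def by blast
qed

lemma isolated_component_annihilator:
  assumes "isolated_primary_component R J q p"
  shows "\<exists>u\<in>carrier R - p. \<forall>c\<in>q. u \<otimes> c \<in> J"
proof -
  obtain Qs where dec: "minimal_primary_decomposition R Qs J" and q: "q \<in> Qs"
    and p: "p = radical R q" and min: "minimal_prime_of R p J"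
    using assms unfolding isolated_primary_component_def by blast
  have ideals: "\<And>Q. Q \<in> Qs \<Longrightarrow> ideal Q R" and J: "\<Inter>Qs = J" and "finite Qs"
    using dec unfolding minimal_primary_decomposition_def primary_ideal_def by auto
  have "primeideal p R" using min unfolding minimal_prime_of_def by blast
  moreover have "\<not> Q \<subseteq> p" if "Q \<in> Qs - {q}" for Q
    using primary_component_not_subset_isolated_prime[OF dec q] that min p by blast
  ultimately obtain u where u: "u \<in> carrier R - p" "\<forall>Q\<in>Qs - {q}. u \<in> Q"
    using ex_notin_prime_mem_ideals[of p "Qs - {q}"] \<open>finite Qs\<close> ideals by blast
  have "u \<otimes> c \<in> Q" if "c \<in> q" "Q \<in> Qs" for c Q
  proof (cases "Q = q")
    case True
    then show ?thesis using ideal.I_l_closed[OF ideals[OF q]] that u by auto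
  next
    case False
    then show ?thesis using ideal.I_r_closed[OF ideals[OF that(2)]] ideal.Icarr[OF ideals[OF q]] that u
      by auto
  qed
  then show ?thesis using u J by blast
qed

lemma isolated_primary_component_primary_localization:
  assumes "isolated_primary_component R J q p"
  shows "primary_localization R p q"
proof -
  have "primary_ideal R q" "radical R q = p" "primeideal p R"
    using assms unfolding isolated_primary_component_def minimal_primary_decomposition_def
      minimal_prime_of_def by auto
  then show ?thesis
    by (intro primary_localization.intro primary_localization_axioms.intro is_cring)
qed

end

section \<open>Extension of initial ideals along a fraction homomorphism\<close>

lemma (in ring) Units_mult_eq_zero_iff:
  assumes "x \<in> Units R" "y \<in> carrier R"
  shows "x \<otimes> y = \<zero> \<longleftrightarrow> y = \<zero>"
  using Units_l_cancel[OF assms zero_closed] Units_closed[OF assms(1)] by simp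

locale fraction_hom = ring_hom_cring +
  fixes T
  assumes submonoid_T: "submonoid T R"
    and hom_Units: "t \<in> T \<Longrightarrow> h t \<in> Units S"
    and fraction: "b \<in> carrier S \<Longrightarrow> \<exists>t\<in>T. \<exists>a\<in>carrier R. h t \<otimes>\<^bsub>S\<^esub> b = h a"
begin

sublocale T: submonoid T R by (rule submonoid_T)

lemma T_carrier: "t \<in> T \<Longrightarrow> t \<in> carrier R"
  using T.subset by blast

lemma common_denominator:
  assumes "finite X" "\<And>E. E \<in> X \<Longrightarrow> g E \<in> carrier S"
  shows "\<exists>t\<in>T. \<forall>E\<in>X. \<exists>a\<in>carrier R. h t \<otimes>\<^bsub>S\<^esub> g E = h a"
  using assms
proof (induction X rule: finite_induct)
  case empty
  then show ?case using T.one_closed by blast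
next
  case (insert E X)
  obtain t where t: "t \<in> T" "\<forall>F\<in>X. \<exists>a\<in>carrier R. h t \<otimes>\<^bsub>S\<^esub> g F = h a" using insert by auto
  obtain s a where s: "s \<in> T" "a \<in> carrier R" "h s \<otimes>\<^bsub>S\<^esub> g E = h a"
    using fraction insert.prems by blast
  have ts: "t \<in> carrier R" "s \<in> carrier R" using t s T_carrier by auto
  have "\<exists>a\<in>carrier R. h (t \<otimes> s) \<otimes>\<^bsub>S\<^esub> g F = h a" if F: "F \<in> insert E X" for F
  proof -
    have gF: "g F \<in> carrier S" using F insert.prems by blast
    show ?thesis
    proof (cases "F = E")
      case True
      have "h (t \<otimes> s) \<otimes>\<^bsub>S\<^esub> g F = h t \<otimes>\<^bsub>S\<^esub> (h s \<otimes>\<^bsub>S\<^esub> g E)"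
        using ts gF True by (simp add: S.m_assoc)
      also have "\<dots> = h (t \<otimes> a)" using ts s by simp
      finally show ?thesis using ts s by blast
    next
      case False
      then obtain a' where a': "a' \<in> carrier R" "h t \<otimes>\<^bsub>S\<^esub> g F = h a'" using F t by auto
      have "h (t \<otimes> s) \<otimes>\<^bsub>S\<^esub> g F = h s \<otimes>\<^bsub>S\<^esub> (h t \<otimes>\<^bsub>S\<^esub> g F)"
        using ts gF by (simp add: S.m_ac)
      also have "\<dots> = h (s \<otimes> a')" using ts a' by simp
      finally show ?thesis using ts a' by blast
    qed
  qed
  then show ?case using t s by blast
qed

lemma mpoly_fraction:
  assumes g: "g \<in> carrier (mpoly_ring S n)"
  shows "\<exists>t\<in>T. \<exists>f\<in>carrier (mpoly_ring R n). (\<lambda>E. h t \<otimes>\<^bsub>S\<^esub> g E) = map_coeffs h f"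
proof -
  have fin: "finite {E. g E \<noteq> \<zero>\<^bsub>S\<^esub>}" and gE: "\<And>E. g E \<in> carrier S"
    and supp: "\<And>E. E \<notin> monoms n \<Longrightarrow> g E = \<zero>\<^bsub>S\<^esub>"
    using g by (auto simp: carrier_mpoly_ring)
  obtain t where t: "t \<in> T" "\<forall>E\<in>{E. g E \<noteq> \<zero>\<^bsub>S\<^esub>}. \<exists>a\<in>carrier R. h t \<otimes>\<^bsub>S\<^esub> g E = h a"
    using common_denominator[OF fin] gE by blast
  define f where "f E = (if g E = \<zero>\<^bsub>S\<^esub> then \<zero> else SOME a. a \<in> carrier R \<and> h t \<otimes>\<^bsub>S\<^esub> g E = h a)" for E
  have fE: "f E \<in> carrier R \<and> h t \<otimes>\<^bsub>S\<^esub> g E = h (f E)" for E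
  proof (cases "g E = \<zero>\<^bsub>S\<^esub>")
    case True
    then show ?thesis using t T_carrier by (simp add: f_def)
  next
    case False
    then have "\<exists>a. a \<in> carrier R \<and> h t \<otimes>\<^bsub>S\<^esub> g E = h a" using t by blast
    then show ?thesis using someI_ex False unfolding f_def by simp
  qed
  have "{E. f E \<noteq> \<zero>} \<subseteq> {E. g E \<noteq> \<zero>\<^bsub>S\<^esub>}" by (auto simp: f_def)
  then have "f \<in> carrier (mpoly_ring R n)"
    using fE fin supp finite_subset by (auto simp: carrier_mpoly_ring f_def)
  moreover have "(\<lambda>E. h t \<otimes>\<^bsub>S\<^esub> g E) = map_coeffs h f" using fE by (auto simp: map_coeffs_def)
  ultimately show ?thesis using t by blast
qed

lemma fraction_add:
  assumes t: "t1 \<in> T" "t2 \<in> T" and f: "f1 \<in> carrier (mpoly_ring R n)" "f2 \<in> carrier (mpoly_ring R n)"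
    and g: "g1 \<in> carrier (mpoly_ring S n)" "g2 \<in> carrier (mpoly_ring S n)"
    and eq: "(\<lambda>E. h t1 \<otimes>\<^bsub>S\<^esub> g1 E) = map_coeffs h f1" "(\<lambda>E. h t2 \<otimes>\<^bsub>S\<^esub> g2 E) = map_coeffs h f2"
  shows "(\<lambda>E. h (t1 \<otimes> t2) \<otimes>\<^bsub>S\<^esub> (g1 \<oplus>\<^bsub>mpoly_ring S n\<^esub> g2) E)
       = map_coeffs h (mpoly_const R t2 \<otimes>\<^bsub>mpoly_ring R n\<^esub> f1 \<oplus>\<^bsub>mpoly_ring R n\<^esub> mpoly_const R t1 \<otimes>\<^bsub>mpoly_ring R n\<^esub> f2)"
proof
  fix E
  have c: "t1 \<in> carrier R" "t2 \<in> carrier R" "f1 E \<in> carrier R" "f2 E \<in> carrier R"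
    "g1 E \<in> carrier S" "g2 E \<in> carrier S"
    using t f g T_carrier by (auto simp: carrier_mpoly_ring)
  have "h (t1 \<otimes> t2) \<otimes>\<^bsub>S\<^esub> (g1 E \<oplus>\<^bsub>S\<^esub> g2 E)
      = h t2 \<otimes>\<^bsub>S\<^esub> (h t1 \<otimes>\<^bsub>S\<^esub> g1 E) \<oplus>\<^bsub>S\<^esub> h t1 \<otimes>\<^bsub>S\<^esub> (h t2 \<otimes>\<^bsub>S\<^esub> g2 E)"
    using c by (simp add: S.r_distr S.m_ac)
  also have "\<dots> = h (t2 \<otimes> f1 E \<oplus> t1 \<otimes> f2 E)"
    using c fun_cong[OF eq(1), of E] fun_cong[OF eq(2), of E] by (simp add: map_coeffs_def)
  finally show "h (t1 \<otimes> t2) \<otimes>\<^bsub>S\<^esub> (g1 \<oplus>\<^bsub>mpoly_ring S n\<^esub> g2) E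
      = map_coeffs h (mpoly_const R t2 \<otimes>\<^bsub>mpoly_ring R n\<^esub> f1 \<oplus>\<^bsub>mpoly_ring R n\<^esub> mpoly_const R t1 \<otimes>\<^bsub>mpoly_ring R n\<^esub> f2) E"
    using c f by (simp add: mpoly_ring_add R.mpoly_const_mult map_coeffs_def)
qed

lemma fraction_mult:
  assumes t: "t1 \<in> T" "t2 \<in> T" and f: "f1 \<in> carrier (mpoly_ring R n)" "f2 \<in> carrier (mpoly_ring R n)"
    and g: "g1 \<in> carrier (mpoly_ring S n)" "g2 \<in> carrier (mpoly_ring S n)"
    and eq: "(\<lambda>E. h t1 \<otimes>\<^bsub>S\<^esub> g1 E) = map_coeffs h f1" "(\<lambda>E. h t2 \<otimes>\<^bsub>S\<^esub> g2 E) = map_coeffs h f2"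
  shows "(\<lambda>E. h (t1 \<otimes> t2) \<otimes>\<^bsub>S\<^esub> (g1 \<otimes>\<^bsub>mpoly_ring S n\<^esub> g2) E) = map_coeffs h (f1 \<otimes>\<^bsub>mpoly_ring R n\<^esub> f2)"
proof -
  have "\<And>E. g1 E \<in> carrier S" "\<And>E. g2 E \<in> carrier S" using g by (auto simp: carrier_mpoly_ring)
  then have "(\<lambda>E. h t1 \<otimes>\<^bsub>S\<^esub> g1 E) \<otimes>\<^bsub>mpoly_ring S n\<^esub> (\<lambda>E. h t2 \<otimes>\<^bsub>S\<^esub> g2 E)
      = (\<lambda>E. h (t1 \<otimes> t2) \<otimes>\<^bsub>S\<^esub> (g1 \<otimes>\<^bsub>mpoly_ring S n\<^esub> g2) E)"
    using t T_carrier by (simp add: S.mpoly_mult_scale)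
  then show ?thesis using eq map_coeffs_mult[OF f] by simp
qed

definition saturation :: "nat \<Rightarrow> ((nat \<Rightarrow> nat) \<Rightarrow> 'a) set \<Rightarrow> ((nat \<Rightarrow> nat) \<Rightarrow> 'c) set" where
  "saturation n I =
     {g \<in> carrier (mpoly_ring S n). \<exists>f\<in>I. \<exists>t\<in>T. (\<lambda>E. h t \<otimes>\<^bsub>S\<^esub> g E) = map_coeffs h f}"

lemma saturationI:
  "\<lbrakk>g \<in> carrier (mpoly_ring S n); f \<in> I; t \<in> T; (\<lambda>E. h t \<otimes>\<^bsub>S\<^esub> g E) = map_coeffs h f\<rbrakk>
     \<Longrightarrow> g \<in> saturation n I"
  unfolding saturation_def by blast

lemma saturationE:
  assumes "g \<in> saturation n I"
  obtains f t where "g \<in> carrier (mpoly_ring S n)" "f \<in> I" "t \<in> T"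
    "(\<lambda>E. h t \<otimes>\<^bsub>S\<^esub> g E) = map_coeffs h f"
  using assms unfolding saturation_def by blast

lemma saturation_mult:
  assumes I: "ideal I (mpoly_ring R n)" and PS: "ring (mpoly_ring S n)"
    and g: "g \<in> saturation n I" and x: "x \<in> carrier (mpoly_ring S n)"
  shows "x \<otimes>\<^bsub>mpoly_ring S n\<^esub> g \<in> saturation n I" "g \<otimes>\<^bsub>mpoly_ring S n\<^esub> x \<in> saturation n I"
proof -
  interpret I: ideal I "mpoly_ring R n" by (rule I)
  interpret PS: ring "mpoly_ring S n" by (rule PS)
  obtain f t where g': "g \<in> carrier (mpoly_ring S n)" and f: "f \<in> I" "t \<in> T"
    "(\<lambda>E. h t \<otimes>\<^bsub>S\<^esub> g E) = map_coeffs h f"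
    using g by (rule saturationE)
  obtain s c where c: "s \<in> T" "c \<in> carrier (mpoly_ring R n)" "(\<lambda>E. h s \<otimes>\<^bsub>S\<^esub> x E) = map_coeffs h c"
    using mpoly_fraction[OF x] by blast
  have fc: "f \<in> carrier (mpoly_ring R n)" by (rule I.Icarr[OF f(1)])
  show "x \<otimes>\<^bsub>mpoly_ring S n\<^esub> g \<in> saturation n I"
    by (rule saturationI[OF PS.m_closed[OF x g'] I.I_l_closed[OF f(1) c(2)] T.m_closed[OF c(1) f(2)]
          fraction_mult[OF c(1) f(2) c(2) fc x g' c(3) f(3)]])
  show "g \<otimes>\<^bsub>mpoly_ring S n\<^esub> x \<in> saturation n I"
    by (rule saturationI[OF PS.m_closed[OF g' x] I.I_r_closed[OF f(1) c(2)] T.m_closed[OF f(2) c(1)]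
          fraction_mult[OF f(2) c(1) fc c(2) g' x f(3) c(3)]])
qed

lemma saturation_add:
  assumes I: "ideal I (mpoly_ring R n)" and PS: "ring (mpoly_ring S n)"
    and g: "g1 \<in> saturation n I" "g2 \<in> saturation n I"
  shows "g1 \<oplus>\<^bsub>mpoly_ring S n\<^esub> g2 \<in> saturation n I"
proof -
  interpret I: ideal I "mpoly_ring R n" by (rule I)
  interpret PS: ring "mpoly_ring S n" by (rule PS)
  obtain f1 t1 where g1: "g1 \<in> carrier (mpoly_ring S n)" and f1: "f1 \<in> I" "t1 \<in> T"
    "(\<lambda>E. h t1 \<otimes>\<^bsub>S\<^esub> g1 E) = map_coeffs h f1"
    using g(1) by (rule saturationE)
  obtain f2 t2 where g2: "g2 \<in> carrier (mpoly_ring S n)" and f2: "f2 \<in> I" "t2 \<in> T"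
    "(\<lambda>E. h t2 \<otimes>\<^bsub>S\<^esub> g2 E) = map_coeffs h f2"
    using g(2) by (rule saturationE)
  have "mpoly_const R t2 \<otimes>\<^bsub>mpoly_ring R n\<^esub> f1 \<oplus>\<^bsub>mpoly_ring R n\<^esub> mpoly_const R t1 \<otimes>\<^bsub>mpoly_ring R n\<^esub> f2 \<in> I"
    using f1 f2 T_carrier R.mpoly_const_closed
    by (intro additive_subgroup.a_closed[OF I.is_additive_subgroup] I.I_l_closed) auto
  moreover have "f1 \<in> carrier (mpoly_ring R n)" "f2 \<in> carrier (mpoly_ring R n)"
    using I.Icarr f1(1) f2(1) by auto
  then have "(\<lambda>E. h (t1 \<otimes> t2) \<otimes>\<^bsub>S\<^esub> (g1 \<oplus>\<^bsub>mpoly_ring S n\<^esub> g2) E)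
      = map_coeffs h (mpoly_const R t2 \<otimes>\<^bsub>mpoly_ring R n\<^esub> f1 \<oplus>\<^bsub>mpoly_ring R n\<^esub> mpoly_const R t1 \<otimes>\<^bsub>mpoly_ring R n\<^esub> f2)"
    by (rule fraction_add[OF f1(2) f2(2) _ _ g1 g2 f1(3) f2(3)])
  ultimately show ?thesis by (rule saturationI[OF PS.a_closed[OF g1 g2] _ T.m_closed[OF f1(2) f2(2)]])
qed

lemma ideal_saturation:
  assumes I: "ideal I (mpoly_ring R n)" and PS: "ring (mpoly_ring S n)"
  shows "ideal (saturation n I) (mpoly_ring S n)"
proof -
  interpret I: ideal I "mpoly_ring R n" by (rule I)
  interpret PS: ring "mpoly_ring S n" by (rule PS)
  show ?thesis
  proof (rule idealI[OF PS])
    show "subgroup (saturation n I) (add_monoid (mpoly_ring S n))"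
    proof (rule PS.add.subgroupI)
      show "saturation n I \<subseteq> carrier (mpoly_ring S n)" unfolding saturation_def by blast
      have "(\<lambda>E. h \<one> \<otimes>\<^bsub>S\<^esub> \<zero>\<^bsub>mpoly_ring S n\<^esub> E) = map_coeffs h \<zero>\<^bsub>mpoly_ring R n\<^esub>"
        by (simp add: mpoly_ring_zero map_coeffs_def)
      then have "\<zero>\<^bsub>mpoly_ring S n\<^esub> \<in> saturation n I"
        by (rule saturationI[OF PS.zero_closed additive_subgroup.zero_closed[OF I.is_additive_subgroup]
              T.one_closed])
      then show "saturation n I \<noteq> {}" by blast
    next
      fix g assume g: "g \<in> saturation n I"
      then have "g \<in> carrier (mpoly_ring S n)" by (auto elim: saturationE)
      then have "\<ominus>\<^bsub>mpoly_ring S n\<^esub> g = (\<ominus>\<^bsub>mpoly_ring S n\<^esub> \<one>\<^bsub>mpoly_ring S n\<^esub>) \<otimes>\<^bsub>mpoly_ring S n\<^esub> g"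
        by (simp add: PS.l_minus)
      then show "\<ominus>\<^bsub>mpoly_ring S n\<^esub> g \<in> saturation n I"
        using saturation_mult(1)[OF I PS g] by simp
    next
      fix g1 g2 assume "g1 \<in> saturation n I" "g2 \<in> saturation n I"
      then show "g1 \<oplus>\<^bsub>mpoly_ring S n\<^esub> g2 \<in> saturation n I" by (rule saturation_add[OF I PS])
    qed
  qed (auto intro: saturation_mult[OF I PS])
qed

lemma genideal_map_coeffs_subset_saturation:
  assumes I: "ideal I (mpoly_ring R n)" and PS: "ring (mpoly_ring S n)"
  shows "genideal (mpoly_ring S n) (map_coeffs h ` I) \<subseteq> saturation n I"
proof (rule ring.genideal_minimal[OF PS ideal_saturation[OF I PS]], rule image_subsetI)
  fix f assume f: "f \<in> I"
  then have "f \<in> carrier (mpoly_ring R n)" using ideal.Icarr[OF I] by blast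
  then show "map_coeffs h f \<in> saturation n I"
    by (intro saturationI[OF map_coeffs_closed f T.one_closed]) (auto simp: map_coeffs_def carrier_mpoly_ring)
qed

lemma kernel_part_mem_ideal:
  assumes I: "ideal I (mpoly_ring R n)" and u: "u \<in> T"
    and kernel: "\<And>c. \<lbrakk>c \<in> carrier R; h c = \<zero>\<^bsub>S\<^esub>\<rbrakk> \<Longrightarrow> u \<otimes> c \<in> contract_const R I"
    and f: "f \<in> I"
  shows "(\<lambda>E. if h (f E) = \<zero>\<^bsub>S\<^esub> then u \<otimes> f E else \<zero>) \<in> I" (is "?fk \<in> I")
proof -
  interpret I: ideal I "mpoly_ring R n" by (rule I)
  have fc: "f \<in> carrier (mpoly_ring R n)" by (rule I.Icarr[OF f])
  have uc: "u \<in> carrier R" using u T_carrier by blast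
  have fE: "f E \<in> carrier R" for E using fc by (auto simp: carrier_mpoly_ring)
  have "{E. ?fk E \<noteq> \<zero>} \<subseteq> {E. f E \<noteq> \<zero>}" using fE uc by auto
  moreover have "finite {E. f E \<noteq> \<zero>}" using fc by (simp add: carrier_mpoly_ring)
  ultimately have "finite {E. ?fk E \<noteq> \<zero>}" by (rule finite_subset)
  then have "?fk \<in> carrier (mpoly_ring R n)" using fc uc fE unfolding carrier_mpoly_ring by auto
  moreover have "\<zero> \<in> contract_const R I"
    using additive_subgroup.zero_closed[OF I.is_additive_subgroup]
    by (simp add: contract_const_def mpoly_const_def mpoly_ring_zero)
  ultimately show ?thesis
    using kernel fE by (intro R.mpoly_mem_ideal_if_coeffs_mem_contract[OF I]) simp_all
qed

lemma ex_kernel_free_multiple: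
  assumes I: "ideal I (mpoly_ring R n)" and u: "u \<in> T"
    and kernel: "\<And>c. \<lbrakk>c \<in> carrier R; h c = \<zero>\<^bsub>S\<^esub>\<rbrakk> \<Longrightarrow> u \<otimes> c \<in> contract_const R I"
    and f: "f \<in> I"
  shows "\<exists>f'\<in>I. map_coeffs h f' = (\<lambda>E. h u \<otimes>\<^bsub>S\<^esub> h (f E)) \<and> (\<forall>E. f' E \<noteq> \<zero> \<longleftrightarrow> h (f' E) \<noteq> \<zero>\<^bsub>S\<^esub>)"
proof -
  interpret I: ideal I "mpoly_ring R n" by (rule I)
  have fc: "f \<in> carrier (mpoly_ring R n)" by (rule I.Icarr[OF f])
  have uc: "u \<in> carrier R" using u T_carrier by blast
  have fE: "f E \<in> carrier R" for E using fc by (auto simp: carrier_mpoly_ring)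
  define fk where "fk E = (if h (f E) = \<zero>\<^bsub>S\<^esub> then u \<otimes> f E else \<zero>)" for E
  have fk: "fk \<in> I" unfolding fk_def by (rule kernel_part_mem_ideal[OF I u kernel f])
  define f' where "f' = mpoly_const R u \<otimes>\<^bsub>mpoly_ring R n\<^esub> f \<ominus>\<^bsub>mpoly_ring R n\<^esub> fk"
  have f'I: "f' \<in> I"
    unfolding f'_def a_minus_def
    using I.I_l_closed[OF f R.mpoly_const_closed[OF uc]] fk
    by (intro additive_subgroup.a_closed[OF I.is_additive_subgroup]
        additive_subgroup.a_inv_closed[OF I.is_additive_subgroup])
  have f'E: "f' E = (if h (f E) = \<zero>\<^bsub>S\<^esub> then \<zero> else u \<otimes> f E)" for E
    using R.mpoly_const_mult[OF uc fc] R.mpoly_ring_uminus[OF I.ring_axioms I.Icarr[OF fk]] fE uc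
    by (simp add: f'_def a_minus_def mpoly_ring_add fk_def R.r_neg)
  have hf'E: "h (f' E) = h u \<otimes>\<^bsub>S\<^esub> h (f E)" for E
    using f'E[of E] fE uc by auto
  have "f' E \<noteq> \<zero> \<longleftrightarrow> h (f' E) \<noteq> \<zero>\<^bsub>S\<^esub>" for E
  proof (cases "h (f E) = \<zero>\<^bsub>S\<^esub>")
    case True
    then show ?thesis using f'E[of E] by simp
  next
    case False
    then have "h (f' E) \<noteq> \<zero>\<^bsub>S\<^esub>" using hf'E[of E] S.Units_mult_eq_zero_iff[OF hom_Units[OF u]] fE by simp
    then show ?thesis by auto
  qed
  moreover have "map_coeffs h f' = (\<lambda>E. h u \<otimes>\<^bsub>S\<^esub> h (f E))" using hf'E by (simp add: map_coeffs_def)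
  ultimately show ?thesis using f'I by blast
qed

lemma genideal_map_coeffs_unit_multiple:
  assumes I: "ideal I (mpoly_ring R n)" and PS: "ring (mpoly_ring S n)"
    and u: "u \<in> T" and kernel: "\<And>c. \<lbrakk>c \<in> carrier R; h c = \<zero>\<^bsub>S\<^esub>\<rbrakk> \<Longrightarrow> u \<otimes> c \<in> contract_const R I"
    and g: "g \<in> genideal (mpoly_ring S n) (map_coeffs h ` I)"
  shows "\<exists>f'\<in>I. \<exists>v\<in>Units S. g = (\<lambda>E. v \<otimes>\<^bsub>S\<^esub> map_coeffs h f' E)
           \<and> (\<forall>E. f' E \<noteq> \<zero> \<longleftrightarrow> h (f' E) \<noteq> \<zero>\<^bsub>S\<^esub>)"
proof -
  obtain f t where f: "f \<in> I" "t \<in> T" and gc: "g \<in> carrier (mpoly_ring S n)"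
    and g_eq: "(\<lambda>E. h t \<otimes>\<^bsub>S\<^esub> g E) = map_coeffs h f"
    using genideal_map_coeffs_subset_saturation[OF I PS] g by (blast elim: saturationE)
  obtain f' where f': "f' \<in> I" "map_coeffs h f' = (\<lambda>E. h u \<otimes>\<^bsub>S\<^esub> h (f E))"
    and supp: "\<forall>E. f' E \<noteq> \<zero> \<longleftrightarrow> h (f' E) \<noteq> \<zero>\<^bsub>S\<^esub>"
    using ex_kernel_free_multiple[OF I u kernel f(1)] by blast
  have ut: "u \<otimes> t \<in> T" "h (u \<otimes> t) \<in> Units S" using u f(2) hom_Units by auto
  have gE: "g E \<in> carrier S" for E using gc by (auto simp: carrier_mpoly_ring)
  have "map_coeffs h f' E = h (u \<otimes> t) \<otimes>\<^bsub>S\<^esub> g E" for E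
    using f'(2) fun_cong[OF g_eq, of E] u f(2) T_carrier gE by (simp add: map_coeffs_def S.m_assoc)
  then have "g = (\<lambda>E. inv\<^bsub>S\<^esub> h (u \<otimes> t) \<otimes>\<^bsub>S\<^esub> map_coeffs h f' E)"
    using ut gE by (simp add: S.m_assoc[symmetric])
  then show ?thesis using f'(1) supp S.Units_inv_Units[OF ut(2)] by blast
qed

lemma init_term_mem_genideal_map_coeffs:
  assumes mo: "monomial_order n gt" and I: "ideal I (mpoly_ring R n)" and PS: "ring (mpoly_ring S n)"
    and u: "u \<in> T" and kernel: "\<And>c. \<lbrakk>c \<in> carrier R; h c = \<zero>\<^bsub>S\<^esub>\<rbrakk> \<Longrightarrow> u \<otimes> c \<in> contract_const R I"
    and g: "g \<in> genideal (mpoly_ring S n) (map_coeffs h ` I)" "g \<noteq> \<zero>\<^bsub>mpoly_ring S n\<^esub>"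
  shows "init_term S gt g \<in> genideal (mpoly_ring S n) (map_coeffs h ` init_ideal R n gt I)"
proof -
  interpret I: ideal I "mpoly_ring R n" by (rule I)
  interpret PS: ring "mpoly_ring S n" by (rule PS)
  obtain f' v where f': "f' \<in> I" and v: "v \<in> Units S" and g_eq: "g = (\<lambda>E. v \<otimes>\<^bsub>S\<^esub> map_coeffs h f' E)"
    and supp: "\<And>E. f' E \<noteq> \<zero> \<longleftrightarrow> h (f' E) \<noteq> \<zero>\<^bsub>S\<^esub>"
    using genideal_map_coeffs_unit_multiple[OF I PS u kernel g(1)] by blast
  have f'c: "f' \<in> carrier (mpoly_ring R n)" by (rule I.Icarr[OF f'])
  have vc: "v \<in> carrier S" using v by blast
  have v_supp: "v \<otimes>\<^bsub>S\<^esub> y \<noteq> \<zero>\<^bsub>S\<^esub> \<longleftrightarrow> y \<noteq> \<zero>\<^bsub>S\<^esub>" if "y \<in> carrier S" for y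
    using S.Units_mult_eq_zero_iff[OF v that] by simp
  have nz: "f' \<noteq> \<zero>\<^bsub>mpoly_ring R n\<^esub>"
    using g(2) g_eq supp by (auto simp: mpoly_ring_zero map_coeffs_def vc)
  then have lead: "h (f' (lead_monom R gt f')) \<noteq> \<zero>\<^bsub>S\<^esub>"
    using lead_monom_greatest(1)[OF mo f'c] supp by blast
  have "init_term S gt g = (\<lambda>E. v \<otimes>\<^bsub>S\<^esub> init_term S gt (map_coeffs h f') E)"
    using g_eq S.init_term_scale[OF vc] v_supp map_coeffs_closed[OF f'c] by (metis carrier_mpoly_ring)
  also have "\<dots> = mpoly_const S v \<otimes>\<^bsub>mpoly_ring S n\<^esub> map_coeffs h (init_term R gt f')"
    using S.mpoly_const_mult[OF vc map_coeffs_closed[OF R.init_term_closed[OF mo f'c]]]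
      map_coeffs_init_term[OF mo f'c lead] by simp
  also have "\<dots> \<in> genideal (mpoly_ring S n) (map_coeffs h ` init_ideal R n gt I)"
  proof -
    have I_sub: "I \<subseteq> carrier (mpoly_ring R n)" using I.Icarr by blast
    have image: "map_coeffs h ` init_ideal R n gt I \<subseteq> carrier (mpoly_ring S n)"
      using ideal.Icarr[OF R.ideal_init_ideal[OF I.ring_axioms mo I_sub]] map_coeffs_closed by blast
    have "init_term R gt f' \<in> init_ideal R n gt I"
      by (rule R.init_term_mem_init_ideal[OF I.ring_axioms mo I_sub f' nz])
    then show ?thesis
      using PS.genideal_self[OF image] ideal.I_l_closed[OF PS.genideal_ideal[OF image]]
        S.mpoly_const_closed[OF vc] by blast
  qed
  finally show ?thesis .
qed

theorem genideal_map_coeffs_init_ideal: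
  assumes mo: "monomial_order n gt" and I: "ideal I (mpoly_ring R n)" and PS: "ring (mpoly_ring S n)"
    and u: "u \<in> T" and kernel: "\<And>c. \<lbrakk>c \<in> carrier R; h c = \<zero>\<^bsub>S\<^esub>\<rbrakk> \<Longrightarrow> u \<otimes> c \<in> contract_const R I"
  shows "genideal (mpoly_ring S n) (map_coeffs h ` init_ideal R n gt I)
       = init_ideal S n gt (genideal (mpoly_ring S n) (map_coeffs h ` I))"
proof
  interpret I: ideal I "mpoly_ring R n" by (rule I)
  interpret PS: ring "mpoly_ring S n" by (rule PS)
  have I_sub: "I \<subseteq> carrier (mpoly_ring R n)" using I.Icarr by blast
  show "genideal (mpoly_ring S n) (map_coeffs h ` init_ideal R n gt I)
      \<subseteq> init_ideal S n gt (genideal (mpoly_ring S n) (map_coeffs h ` I))"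
    by (rule genideal_map_coeffs_init_ideal_subset[OF mo I.ring_axioms PS I_sub])
  have "map_coeffs h ` init_ideal R n gt I \<subseteq> carrier (mpoly_ring S n)"
    using ideal.Icarr[OF R.ideal_init_ideal[OF I.ring_axioms mo I_sub]] map_coeffs_closed by blast
  then show "init_ideal S n gt (genideal (mpoly_ring S n) (map_coeffs h ` I))
      \<subseteq> genideal (mpoly_ring S n) (map_coeffs h ` init_ideal R n gt I)"
    unfolding init_ideal_def[of S]
    by (rule PS.genideal_minimal[OF PS.genideal_ideal])
      (use init_term_mem_genideal_map_coeffs[OF mo I PS u kernel] in blast)
qed

end

lemma (in primary_localization) fraction_hom_to_B:
  "fraction_hom R (B_ring R p q) (to_B R p q) (carrier R - p)"
  by (intro fraction_hom.intro ring_hom_cring.intro ring_hom_cring_axioms.intro fraction_hom_axioms.intro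
      is_cring cring_B_ring to_B_ring_hom submonoid_compl_p to_B_Units to_B_fraction)

lemma genideal_non_ring: "\<not> ring R \<Longrightarrow> genideal R X = UNIV"
  unfolding genideal_def using ideal.axioms(2) by blast

theorem proposition3p10:
  fixes A :: "('a, 'm) ring_scheme" and n :: nat
    and gt :: "(nat \<Rightarrow> nat) \<Rightarrow> (nat \<Rightarrow> nat) \<Rightarrow> bool"
    and I :: "((nat \<Rightarrow> nat) \<Rightarrow> 'a) set" and q p :: "'a set"
  assumes "cring A" and "noetherian_ring A"
    and "monomial_order n gt"
    and "ideal I (mpoly_ring A n)"
    and "isolated_primary_component A (contract_const A I) q p"
  shows "ext_to_Bx A n p q (init_ideal A n gt I)
         = init_ideal (B_ring A p q) n gt (ext_to_Bx A n p q I)"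
proof (cases "ring (mpoly_ring (B_ring A p q) n)")
  case False
  \<comment> \<open>\<open>mpoly_ring B n\<close> is in fact a ring; this case only spares proving the ring axioms,
    since without any ideals both generated ideals are \<open>UNIV\<close>.\<close>
  show ?thesis unfolding ext_to_Bx_def init_ideal_def genideal_non_ring[OF False] ..
next
  case True
  interpret A: cring A by (rule assms(1))
  interpret primary_localization A p q
    by (rule A.isolated_primary_component_primary_localization[OF assms(5)])
  interpret fraction_hom A "B_ring A p q" "to_B A p q" "carrier A - p"
    by (rule fraction_hom_to_B)
  obtain u where u: "u \<in> carrier A - p" "\<forall>c\<in>q. u \<otimes>\<^bsub>A\<^esub> c \<in> contract_const A I"
    using A.isolated_component_annihilator[OF assms(5)] by blast
  have "u \<otimes>\<^bsub>A\<^esub> c \<in> contract_const A I" if "c \<in> carrier A" "to_B A p q c = \<zero>\<^bsub>B_ring A p q\<^esub>" for c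
    using u(2) to_B_eq_zero_iff that by blast
  then show ?thesis
    unfolding ext_to_Bx_def by (rule genideal_map_coeffs_init_ideal[OF assms(3,4) True u(1)])
qed

end
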